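(* There is a universal numerical constant $c<\infty$ such that the following holds. Suppose the chain is $\varrho$-metastable w.r.t. $\mathcal M=\{M_1,\dots,M_K\}$, $K\ge2$, let $(\mathcal S_i)$ be a metastable partition, assume $C_{\mathrm{PI},j}<\infty$ for all $j$ and $C_{\mathrm{mass}}<\infty$. Then for every $f\in\ell^2(\mu)$ and every $i$, $$\mathrm{Ent}_{\mu_i}\bigl[\mathbb E_\mu[f^2\mid\mathcal F]\bigr]\le c\,\frac{C_{\mathrm{mass}}\,C_{\mathrm{PI},\mathcal M}\,\varrho}{\mu[\mathcal S_i]\,p_{\mathrm{esc}}}\,\mathcal E(f).$$
   Context: Setting: $\mathcal S$ countable; $(X(t))_{t\in\mathbb N_0}$ irreducible positive recurrent discrete-time Markov chain with transition probabilities $p(x,y)$, reversible w.r.t. its invariant probability measure $\mu$; $\mathbb P_\nu$ law started from $\nu$; $\tau_A=\inf\{t>0:X(t)\in A\}$; $\mu_A=\mu[\cdot\mid A]$; $\mathcal E(f)=\frac12\sum_{x,y}\mu(x)p(x,y)(f(x)-f(y))^2$; $\mathrm{Ent}_\nu[g]=\mathbb E_\nu[g\ln g]-\mathbb E_\nu[g]\ln\mathbb E_\nu[g]$. Metastability: $\mathcal M=\{M_1,\dots,M_K\}$ nonempty pairwise disjoint, $\mathbf M=\bigcup_jM_j$; $p_{\mathrm{esc}}:=\max_{M\in\mathcal M}\mathbb P_{\mu_M}[\tau_{\mathbf M\setminus M}<\tau_M]$; $\varrho$-metastable means $|\mathcal M|\,p_{\mathrm{esc}}\le\varrho\min_{\emptyset\ne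 A\subset\mathcal S\setminus\mathbf M}\mathbb P_{\mu_A}[\tau_{\mathbf M}<\tau_A]$. Local valley $\mathcal V_i=\{x:\mathbb P_x[\tau_{M_i}<\tau_{\mathbf M\setminus M_i}]\ge\max_{j\ne i}\mathbb P_x[\tau_{M_j}<\tau_{\mathbf M\setminus M_j}]\}$; metastable partition: $\mathcal S=\biguplus_i\mathcal S_i$, $\mathcal S_i\subset\mathcal V_i$, $M_i\subset\mathcal S_i$; $\mu_i=\mu[\cdot\mid\mathcal S_i]$. $\mathcal F$ is the $\sigma$-algebra generated by the partition of $\mathcal S$ into $M_1,\dots,M_K$ and the singletons $\{x\}$, $x\notin\mathbf M$. $C_{\mathrm{PI},j}=\sup\{\mathrm{Var}_{\mu_{M_j}}[f]:f\in\ell^2(\mu),\mathcal E(f)=1\}$, $C_{\mathrm{PI},\mathcal M}=\max\{1,\sum_j\mu[M_j]C_{\mathrm{PI},j}\}$, $C_{\mathrm{mass}}=\max_j\max_{x\in\mathcal S_j}\ln(1+e^2/\mu_j(x))$. *)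

theory Defs
  imports "HOL-Probability.Probability"
begin

text \<open>State space: a subset S of nat (any countable set up to relabelling).
  Transition kernel P :: nat => nat pmf, p(x,y) = pmf (P x) y.
  mu :: nat => real is the invariant probability measure.\<close>

definition trans_p :: "(nat \<Rightarrow> nat pmf) \<Rightarrow> nat \<Rightarrow> nat \<Rightarrow> real" where
  "trans_p P x y = pmf (P x) y"

text \<open>Law of the path (X(1),...,X(n)) under P_x.\<close>
fun path_pmf :: "(nat \<Rightarrow> nat pmf) \<Rightarrow> nat \<Rightarrow> nat \<Rightarrow> nat list pmf" where
  "path_pmf P 0 x = return_pmf []"
| "path_pmf P (Suc n) x = bind_pmf (P x) (\<lambda>y. map_pmf (Cons y) (path_pmf P n y))"

text \<open>P_x[tau_A < tau_B], tau_A = inf{t>0 : X(t) in A}, inf {} = infinity: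
  the first time t>0 at which the chain is in A or B, exists and the chain is then in A but not B.\<close>
definition hit_before :: "(nat \<Rightarrow> nat pmf) \<Rightarrow> nat set \<Rightarrow> nat set \<Rightarrow> nat \<Rightarrow> real" where
  "hit_before P A B x = (SUP n. measure_pmf.prob (path_pmf P n x)
      {xs. \<exists>k<length xs. xs!k \<in> A \<and> xs!k \<notin> B \<and> (\<forall>j<k. xs!j \<notin> A \<and> xs!j \<notin> B)})"

definition mass :: "(nat \<Rightarrow> real) \<Rightarrow> nat set \<Rightarrow> real" where
  "mass \<mu> A = (\<Sum>\<^sub>\<infinity>x\<in>A. \<mu> x)"

definition prob_from :: "(nat \<Rightarrow> real) \<Rightarrow> nat set \<Rightarrow> (nat \<Rightarrow> real) \<Rightarrow> real" where
  "prob_from \<mu> A h = (\<Sum>\<^sub>\<infinity>x\<in>A. \<mu> x * h x) / mass \<mu> A"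

definition irreducible :: "nat set \<Rightarrow> (nat \<Rightarrow> nat pmf) \<Rightarrow> bool" where
  "irreducible S P \<longleftrightarrow> (\<forall>x\<in>S. \<forall>y\<in>S. x \<noteq> y \<longrightarrow>
      (\<exists>n. measure_pmf.prob (path_pmf P n x) {xs. y \<in> set xs} > 0))"

text \<open>Positive recurrence: E_x[tau_x] = sum_{n>=0} P_x[tau_x > n] < infinity for all x.\<close>
definition positive_recurrent :: "nat set \<Rightarrow> (nat \<Rightarrow> nat pmf) \<Rightarrow> bool" where
  "positive_recurrent S P \<longleftrightarrow> (\<forall>x\<in>S.
      summable (\<lambda>n. measure_pmf.prob (path_pmf P n x) {xs. x \<notin> set xs}))"

definition markov_setting :: "nat set \<Rightarrow> (nat \<Rightarrow> nat pmf) \<Rightarrow> (nat \<Rightarrow> real) \<Rightarrow> bool" where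
  "markov_setting S P \<mu> \<longleftrightarrow>
     (\<forall>x\<in>S. set_pmf (P x) \<subseteq> S) \<and>
     irreducible S P \<and> positive_recurrent S P \<and>
     (\<forall>x\<in>S. 0 \<le> \<mu> x) \<and> (\<mu> has_sum 1) S \<and>
     (\<forall>y\<in>S. ((\<lambda>x. \<mu> x * trans_p P x y) has_sum \<mu> y) S) \<and>
     (\<forall>x\<in>S. \<forall>y\<in>S. \<mu> x * trans_p P x y = \<mu> y * trans_p P y x)"

definition l2 :: "nat set \<Rightarrow> (nat \<Rightarrow> real) \<Rightarrow> (nat \<Rightarrow> real) \<Rightarrow> bool" where
  "l2 S \<mu> f \<longleftrightarrow> (\<lambda>x. \<mu> x * (f x)\<^sup>2) summable_on S"

definition dirichlet :: "nat set \<Rightarrow> (nat \<Rightarrow> nat pmf) \<Rightarrow> (nat \<Rightarrow> real) \<Rightarrow> (nat \<Rightarrow> real) \<Rightarrow> real" where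
  "dirichlet S P \<mu> f = (1/2) * (\<Sum>\<^sub>\<infinity>(x,y)\<in>S \<times> S. \<mu> x * trans_p P x y * (f x - f y)\<^sup>2)"

definition expect :: "(nat \<Rightarrow> real) \<Rightarrow> nat set \<Rightarrow> (nat \<Rightarrow> real) \<Rightarrow> real" where
  "expect \<mu> A g = (\<Sum>\<^sub>\<infinity>x\<in>A. (\<mu> x / mass \<mu> A) * g x)"

definition variance_on :: "(nat \<Rightarrow> real) \<Rightarrow> nat set \<Rightarrow> (nat \<Rightarrow> real) \<Rightarrow> real" where
  "variance_on \<mu> A f = expect \<mu> A (\<lambda>x. (f x)\<^sup>2) - (expect \<mu> A f)\<^sup>2"

text \<open>Ent_{mu_A}[g]; +infinity if g ln g is not mu_A-summable (its negative part is always summable).\<close>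
definition ent :: "(nat \<Rightarrow> real) \<Rightarrow> nat set \<Rightarrow> (nat \<Rightarrow> real) \<Rightarrow> ereal" where
  "ent \<mu> A g = (if (\<lambda>x. \<mu> x * (g x * ln (g x))) summable_on A
      then ereal (expect \<mu> A (\<lambda>x. g x * ln (g x)) - expect \<mu> A g * ln (expect \<mu> A g))
      else \<infinity>)"

definition C_PI :: "nat set \<Rightarrow> (nat \<Rightarrow> nat pmf) \<Rightarrow> (nat \<Rightarrow> real) \<Rightarrow> nat set \<Rightarrow> ereal" where
  "C_PI S P \<mu> Mj = Sup {ereal (variance_on \<mu> Mj f) | f. l2 S \<mu> f \<and> dirichlet S P \<mu> f = 1}"

definition C_PI_M :: "nat set \<Rightarrow> (nat \<Rightarrow> nat pmf) \<Rightarrow> (nat \<Rightarrow> real) \<Rightarrow> nat \<Rightarrow> (nat \<Rightarrow> nat set) \<Rightarrow> ereal" where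
  "C_PI_M S P \<mu> K M = max 1 (\<Sum>j<K. ereal (mass \<mu> (M j)) * C_PI S P \<mu> (M j))"

definition C_mass :: "(nat \<Rightarrow> real) \<Rightarrow> nat \<Rightarrow> (nat \<Rightarrow> nat set) \<Rightarrow> ereal" where
  "C_mass \<mu> K Sp = (SUP j\<in>{..<K}. SUP x\<in>Sp j.
      ereal (ln (1 + exp 2 / (\<mu> x / mass \<mu> (Sp j)))))"

definition Mall :: "nat \<Rightarrow> (nat \<Rightarrow> nat set) \<Rightarrow> nat set" where
  "Mall K M = (\<Union>j<K. M j)"

definition metastable_sets :: "nat set \<Rightarrow> nat \<Rightarrow> (nat \<Rightarrow> nat set) \<Rightarrow> bool" where
  "metastable_sets S K M \<longleftrightarrow> (\<forall>j<K. M j \<noteq> {} \<and> M j \<subseteq> S) \<and>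
     (\<forall>i<K. \<forall>j<K. i \<noteq> j \<longrightarrow> M i \<inter> M j = {})"

definition p_esc :: "(nat \<Rightarrow> nat pmf) \<Rightarrow> (nat \<Rightarrow> real) \<Rightarrow> nat \<Rightarrow> (nat \<Rightarrow> nat set) \<Rightarrow> real" where
  "p_esc P \<mu> K M = Max ((\<lambda>j. prob_from \<mu> (M j) (hit_before P (Mall K M - M j) (M j))) ` {..<K})"

definition rho_metastable :: "nat set \<Rightarrow> (nat \<Rightarrow> nat pmf) \<Rightarrow> (nat \<Rightarrow> real) \<Rightarrow> nat \<Rightarrow> (nat \<Rightarrow> nat set) \<Rightarrow> real \<Rightarrow> bool" where
  "rho_metastable S P \<mu> K M \<rho> \<longleftrightarrow> (\<forall>A. A \<noteq> {} \<and> A \<subseteq> S - Mall K M \<longrightarrow>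
      real K * p_esc P \<mu> K M \<le> \<rho> * prob_from \<mu> A (hit_before P (Mall K M) A))"

definition valley :: "nat set \<Rightarrow> (nat \<Rightarrow> nat pmf) \<Rightarrow> nat \<Rightarrow> (nat \<Rightarrow> nat set) \<Rightarrow> nat \<Rightarrow> nat set" where
  "valley S P K M i = {x\<in>S. hit_before P (M i) (Mall K M - M i) x \<ge>
      Max ((\<lambda>j. hit_before P (M j) (Mall K M - M j) x) ` ({..<K} - {i}))}"

definition metastable_partition :: "nat set \<Rightarrow> (nat \<Rightarrow> nat pmf) \<Rightarrow> nat \<Rightarrow> (nat \<Rightarrow> nat set) \<Rightarrow> (nat \<Rightarrow> nat set) \<Rightarrow> bool" where
  "metastable_partition S P K M Sp \<longleftrightarrow>
     (\<Union>i<K. Sp i) = S \<and> (\<forall>i<K. \<forall>j<K. i \<noteq> j \<longrightarrow> Sp i \<inter> Sp j = {}) \<and>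
     (\<forall>i<K. Sp i \<subseteq> valley S P K M i \<and> M i \<subseteq> Sp i)"

text \<open>E_mu[f^2 | F]: average of f^2 over M_j w.r.t. mu on M_j, and f^2 itself off M.\<close>
definition cond_sq :: "(nat \<Rightarrow> real) \<Rightarrow> nat \<Rightarrow> (nat \<Rightarrow> nat set) \<Rightarrow> (nat \<Rightarrow> real) \<Rightarrow> nat \<Rightarrow> real" where
  "cond_sq \<mu> K M f x = (if \<exists>j<K. x \<in> M j
      then expect \<mu> (M (THE j. j < K \<and> x \<in> M j)) (\<lambda>y. (f y)\<^sup>2)
      else (f x)\<^sup>2)"

end

theory Submission
  imports Defs
begin

text \<open>
  Conditioning on \<open>\<F>\<close> replaces \<open>f\<^sup>2\<close> on \<open>M\<^sub>i\<close> by its mean \<open>\<alpha>\<^sup>2\<close>, so on \<open>\<S>\<^sub>i\<close> the function is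
  \<open>h\<^sup>2\<close> with \<open>h = \<alpha>\<close> on \<open>M\<^sub>i\<close> and \<open>h = |f|\<close> elsewhere. The finiteness of \<open>C\<^sub>m\<^sub>a\<^sub>s\<^sub>s\<close> bounds
  \<open>\<mu>\<^sub>i\<close> from below, which makes the state space finite and bounds \<open>Ent(h\<^sup>2)\<close> by
  \<open>6 C\<^sub>m\<^sub>a\<^sub>s\<^sub>s\<close> times the mean square deviation of \<open>h\<close> from \<open>\<alpha>\<close>. That deviation vanishes on \<open>M\<^sub>i\<close>,
  and off \<open>M\<^sub>i\<close> it is controlled by a Maz'ya-type capacitary inequality: every
  \<open>A \<subseteq> \<S>\<^sub>i - M\<^sub>i\<close> has capacity relative to \<open>M\<^sub>i\<close> at least \<open>(p\<^sub>e\<^sub>s\<^sub>c/\<rho>) \<mu>[A]\<close>. This follows from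
  \<open>\<rho>\<close>-metastability (\<open>A\<close> reaches \<open>\<M>\<close> quickly), the valley property (from \<open>\<S>\<^sub>i\<close> the chain
  enters \<open>\<M>\<close> through \<open>M\<^sub>i\<close> with probability at least \<open>1/K\<close>) and reversibility, which turns
  the flow from \<open>A\<close> into \<open>M\<^sub>i\<close> into the flow from \<open>M\<^sub>i\<close> into \<open>A\<close>. The boundary term
  on \<open>M\<^sub>i\<close> created by the cut-off is paid for by the local Poincar\'e constant.
\<close>

section \<open>Hitting probabilities\<close>

lemma measure_bind_pmf_finite:
  assumes "finite A" "set_pmf M \<subseteq> A"
  shows "measure_pmf.prob (bind_pmf M N) X = (\<Sum>a\<in>A. pmf M a * measure_pmf.prob (N a) X)"
proof -
  have "emeasure (measure_pmf (bind_pmf M N)) X = (\<integral>\<^sup>+x. emeasure (measure_pmf (N x)) X \<partial>measure_pmf M)"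
    by simp
  also have "\<dots> = (\<Sum>x\<in>A. emeasure (measure_pmf (N x)) X * pmf M x)"
    using assms by (intro nn_integral_measure_pmf_support) auto
  also have "\<dots> = ennreal (\<Sum>x\<in>A. pmf M x * measure_pmf.prob (N x) X)"
    by (simp add: measure_pmf.emeasure_eq_measure ennreal_mult'' sum_ennreal[symmetric] mult.commute ennreal_mult)
  finally show ?thesis
    by (simp add: measure_pmf.emeasure_eq_measure sum_nonneg)
qed

definition first_entry :: "nat set \<Rightarrow> nat set \<Rightarrow> nat list set" where
  "first_entry A B = {xs. \<exists>k<length xs. xs!k \<in> A \<and> xs!k \<notin> B \<and> (\<forall>j<k. xs!j \<notin> A \<and> xs!j \<notin> B)}"

lemma first_entry_Cons:
  "(y # ys \<in> first_entry A B) = (y\<in>A \<and> y\<notin>B \<or> (y\<notin>A \<and> y\<notin>B \<and> ys \<in> first_entry A B))"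
proof
  assume "y # ys \<in> first_entry A B"
  then obtain k where k: "k < length (y#ys)" "(y#ys)!k \<in> A" "(y#ys)!k \<notin> B"
    "\<forall>j<k. (y#ys)!j \<notin> A \<and> (y#ys)!j \<notin> B" by (auto simp: first_entry_def)
  show "y\<in>A \<and> y\<notin>B \<or> (y\<notin>A \<and> y\<notin>B \<and> ys \<in> first_entry A B)"
  proof (cases k)
    case 0 then show ?thesis using k by simp
  next
    case (Suc k')
    have "y \<notin> A \<and> y \<notin> B" using k(4)[rule_format, of 0] Suc by simp
    moreover have "ys \<in> first_entry A B" unfolding first_entry_def
    proof (intro CollectI exI[of _ k'] conjI allI impI)
      show "k' < length ys" using k(1) Suc by simp
      show "ys!k' \<in> A" "ys!k' \<notin> B" using k(2,3) Suc by auto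
      fix j assume "j < k'" then show "ys!j \<notin> A" "ys!j \<notin> B" using k(4)[rule_format, of "Suc j"] Suc
        by simp_all
    qed
    ultimately show ?thesis by simp
  qed
next
  assume H: "y\<in>A \<and> y\<notin>B \<or> (y\<notin>A \<and> y\<notin>B \<and> ys \<in> first_entry A B)"
  show "y # ys \<in> first_entry A B"
  proof (cases "y\<in>A \<and> y\<notin>B")
    case True then show ?thesis unfolding first_entry_def by (intro CollectI exI[of _ 0]) auto
  next
    case False
    then have y: "y\<notin>A" "y\<notin>B" and "ys \<in> first_entry A B" using H by auto
    then obtain k where k: "k < length ys" "ys!k \<in> A" "ys!k \<notin> B"
      "\<forall>j<k. ys!j \<notin> A \<and> ys!j \<notin> B" by (auto simp: first_entry_def)
    show ?thesis unfolding first_entry_def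
    proof (intro CollectI exI[of _ "Suc k"] conjI allI impI)
      show "Suc k < length (y#ys)" using k by simp
      show "(y#ys)!Suc k \<in> A" "(y#ys)!Suc k \<notin> B" using k by auto
      fix j assume "j < Suc k" then show "(y#ys)!j \<notin> A" "(y#ys)!j \<notin> B"
        using k(4) y by (cases j; auto)+
    qed
  qed
qed

lemma hit_before_first_entry:
  "hit_before P A B x = (SUP n. measure_pmf.prob (path_pmf P n x) (first_entry A B))"
  unfolding hit_before_def first_entry_def by simp

definition avoiding :: "nat set \<Rightarrow> nat list set" where "avoiding U = {xs. set xs \<inter> U = {}}"

locale irreducible_chain =
  fixes S :: "nat set" and P :: "nat \<Rightarrow> nat pmf"
  assumes closed_S: "\<And>x. x\<in>S \<Longrightarrow> set_pmf (P x) \<subseteq> S"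
    and irr: "irreducible S P"
begin

lemma path_pmf_in_closed:
  assumes W: "\<And>x. x\<in>W \<Longrightarrow> set_pmf (P x) \<subseteq> W" and x: "x \<in> W"
    and xs: "xs \<in> set_pmf (path_pmf P n x)"
  shows "set xs \<subseteq> W"
  using x xs
proof (induction n arbitrary: x xs)
  case 0 then show ?case by simp
next
  case (Suc n)
  from Suc.prems(2) obtain y ys where "y \<in> set_pmf (P x)" "ys \<in> set_pmf (path_pmf P n y)" "xs = y # ys"
    by auto
  then show ?case using Suc.IH[of y ys] W Suc.prems(1) by auto
qed

lemma closed_subset_contains:
  assumes W: "\<And>x. x\<in>W \<Longrightarrow> set_pmf (P x) \<subseteq> W" and WS: "W \<subseteq> S"
    and x: "x \<in> W" and u: "u \<in> S"
  shows "u \<in> W"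
proof (rule ccontr)
  assume "u \<notin> W"
  then have "x \<in> S" "x \<noteq> u" using x WS by auto
  then obtain n where n: "measure_pmf.prob (path_pmf P n x) {xs. u \<in> set xs} > 0"
    using irr u unfolding irreducible_def by blast
  have "set_pmf (path_pmf P n x) \<inter> {xs. u \<in> set xs} = {}"
    using path_pmf_in_closed[OF W x] \<open>u \<notin> W\<close> by blast
  then have "measure_pmf.prob (path_pmf P n x) {xs. u \<in> set xs} = 0"
    using measure_pmf_zero_iff by blast
  with n show False by simp
qed

text \<open>The support of a stationary probability is closed under transitions, hence all of \<open>S\<close>.\<close>

lemma stationary_pos:
  fixes \<mu> :: "nat \<Rightarrow> real"
  assumes nn: "\<forall>x\<in>S. 0 \<le> \<mu> x" and hs: "(\<mu> has_sum 1) S"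
    and st: "\<forall>y\<in>S. ((\<lambda>x. \<mu> x * trans_p P x y) has_sum \<mu> y) S" and x: "x \<in> S"
  shows "0 < \<mu> x"
proof -
  define W where "W = {z\<in>S. 0 < \<mu> z}"
  have Wc: "set_pmf (P z) \<subseteq> W" if z: "z \<in> W" for z
  proof
    fix y assume y: "y \<in> set_pmf (P z)"
    have zS: "z \<in> S" using z by (simp add: W_def)
    have yS: "y \<in> S" using closed_S[OF zS] y by auto
    have "0 \<le> \<mu> w * trans_p P w y" if "w \<in> S - {z}" for w
      using that nn by (simp add: trans_p_def)
    then have "sum (\<lambda>x. \<mu> x * trans_p P x y) {z} \<le> \<mu> y"
      using finite_sum_le_has_sum[OF st[rule_format, OF yS], of "{z}"] zS by blast
    moreover have "0 < \<mu> z * trans_p P z y"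
      using z y by (simp add: W_def trans_p_def pmf_positive)
    ultimately show "y \<in> W" using yS by (simp add: W_def)
  qed
  have "W \<noteq> {}"
  proof
    assume "W = {}"
    then have "\<And>z. z \<in> S \<Longrightarrow> \<mu> z = 0" using nn unfolding W_def by fastforce
    then have "(\<mu> has_sum 0) S"
      using has_sum_cong[of S \<mu> "\<lambda>_. 0"] by (simp add: has_sum_0)
    then show False using has_sum_unique[OF hs] by force
  qed
  then obtain w where "w \<in> W" by auto
  then have "x \<in> W" using closed_subset_contains[OF Wc _ _ x] by (auto simp: W_def)
  then show ?thesis by (simp add: W_def)
qed

end

locale finite_chain = irreducible_chain +
  assumes finite_S: "finite S"
begin

abbreviation p where "p \<equiv> trans_p P"

lemma trans_p_nonneg: "0 \<le> p x y" by (simp add: trans_p_def)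

lemma sum_trans_p: "x \<in> S \<Longrightarrow> (\<Sum>y\<in>S. p x y) = 1"
  unfolding trans_p_def using sum_pmf_eq_1[OF finite_S closed_S] by simp

definition hit_by :: "nat set \<Rightarrow> nat set \<Rightarrow> nat \<Rightarrow> nat \<Rightarrow> real" where
  "hit_by A B n x = measure_pmf.prob (path_pmf P n x) (first_entry A B)"

definition step_value :: "nat set \<Rightarrow> nat set \<Rightarrow> (nat \<Rightarrow> real) \<Rightarrow> nat \<Rightarrow> real" where
  "step_value A B f y = (if y\<in>A \<and> y\<notin>B then 1 else if y\<in>A \<or> y\<in>B then 0 else f y)"

lemma hit_by_0[simp]: "hit_by A B 0 x = 0"
  by (simp add: hit_by_def first_entry_def)

lemma prob_path_pmf_Suc:
  assumes "x \<in> S"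
  shows "measure_pmf.prob (path_pmf P (Suc n) x) X
     = (\<Sum>y\<in>S. p x y * measure_pmf.prob (path_pmf P n y) {ys. y # ys \<in> X})"
proof -
  have "measure_pmf.prob (path_pmf P (Suc n) x) X
     = (\<Sum>y\<in>S. pmf (P x) y * measure_pmf.prob (map_pmf (Cons y) (path_pmf P n y)) X)"
    by (simp only: path_pmf.simps) (rule measure_bind_pmf_finite[OF finite_S closed_S[OF assms]])
  also have "\<dots> = (\<Sum>y\<in>S. p x y * measure_pmf.prob (path_pmf P n y) {ys. y # ys \<in> X})"
    by (simp add: trans_p_def vimage_def)
  finally show ?thesis .
qed

lemma hit_by_Suc:
  assumes "x \<in> S"
  shows "hit_by A B (Suc n) x = (\<Sum>y\<in>S. p x y * step_value A B (hit_by A B n) y)"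
  unfolding hit_by_def prob_path_pmf_Suc[OF assms]
proof (rule sum.cong[OF refl])
  fix y
  have "{ys. y # ys \<in> first_entry A B} = (if y\<in>A \<and> y\<notin>B then UNIV else if y\<in>A \<or> y\<in>B then {} else first_entry A B)"
    by (auto simp: first_entry_Cons)
  then show "p x y * measure_pmf.prob (path_pmf P n y) {ys. y # ys \<in> first_entry A B} =
         p x y * step_value A B (\<lambda>x. measure_pmf.prob (path_pmf P n x) (first_entry A B)) y"
    by (simp add: step_value_def)
qed

lemma hit_by_nonneg: "0 \<le> hit_by A B n x" by (simp add: hit_by_def)

lemma hit_by_le_1: "hit_by A B n x \<le> 1" by (simp add: hit_by_def)

lemma step_value_mono: "(\<And>y. y \<in> S \<Longrightarrow> f y \<le> g y) \<Longrightarrow> y \<in> S \<Longrightarrow> step_value A B f y \<le> step_value A B g y"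
  by (simp add: step_value_def)

lemma hit_by_le_Suc: "x \<in> S \<Longrightarrow> hit_by A B n x \<le> hit_by A B (Suc n) x"
proof (induction n arbitrary: x)
  case 0 then show ?case by (simp add: hit_by_nonneg)
next
  case (Suc n)
  show ?case unfolding hit_by_Suc[OF Suc.prems] hit_by_Suc[OF Suc.prems, of A B "Suc n"]
    by (intro sum_mono mult_left_mono step_value_mono Suc.IH) (auto simp: trans_p_nonneg)
qed

lemma incseq_hit_by: "x \<in> S \<Longrightarrow> incseq (\<lambda>n. hit_by A B n x)"
  by (rule incseq_SucI) (rule hit_by_le_Suc)

lemma hit_before_eq_SUP_hit_by: "hit_before P A B x = (SUP n. hit_by A B n x)"
  by (simp add: hit_before_first_entry hit_by_def)

lemma bdd_above_hit_by: "bdd_above (range (\<lambda>n. hit_by A B n x))"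
  by (rule bdd_aboveI[of _ 1]) (auto simp: hit_by_le_1)

lemma hit_by_tendsto: "x \<in> S \<Longrightarrow> (\<lambda>n. hit_by A B n x) \<longlonglongrightarrow> hit_before P A B x"
  unfolding hit_before_eq_SUP_hit_by by (rule LIMSEQ_incseq_SUP[OF bdd_above_hit_by incseq_hit_by])

lemma hit_before_nonneg: "0 \<le> hit_before P A B x"
  unfolding hit_before_eq_SUP_hit_by using cSUP_upper[OF _ bdd_above_hit_by, of 0 A B x] hit_by_nonneg[of A B 0 x] by simp

lemma step_value_tendsto: "y \<in> S \<Longrightarrow> (\<lambda>n. step_value A B (hit_by A B n) y) \<longlonglongrightarrow> step_value A B (hit_before P A B) y"
  unfolding step_value_def using hit_by_tendsto[of y A B] by auto

lemma hit_before_one_step: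
  assumes "x \<in> S"
  shows "hit_before P A B x = (\<Sum>y\<in>S. p x y * step_value A B (hit_before P A B) y)"
proof -
  have "(\<lambda>n. hit_by A B (Suc n) x) \<longlonglongrightarrow> hit_before P A B x"
    using hit_by_tendsto[OF assms] by (rule LIMSEQ_Suc)
  moreover have "(\<lambda>n. hit_by A B (Suc n) x) \<longlonglongrightarrow> (\<Sum>y\<in>S. p x y * step_value A B (hit_before P A B) y)"
    unfolding hit_by_Suc[OF assms] by (intro tendsto_sum tendsto_mult tendsto_const step_value_tendsto)
  ultimately show ?thesis by (rule LIMSEQ_unique)
qed

lemma hit_by_antimono_avoid:
  assumes "A \<inter> B = {}" "B' \<subseteq> B" "x \<in> S"
  shows "hit_by A B n x \<le> hit_by A B' n x"
  using assms(3)
proof (induction n arbitrary: x)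
  case 0 then show ?case by simp
next
  case (Suc n)
  show ?case unfolding hit_by_Suc[OF Suc.prems]
  proof (intro sum_mono mult_left_mono)
    fix y assume y: "y \<in> S"
    show "step_value A B (hit_by A B n) y \<le> step_value A B' (hit_by A B' n) y"
      using assms(1,2) Suc.IH[OF y] hit_by_nonneg[of A B' n y] unfolding step_value_def by auto
  qed (simp add: trans_p_nonneg)
qed

lemma hit_before_antimono_avoid:
  assumes "A \<inter> B = {}" "B' \<subseteq> B" "x \<in> S"
  shows "hit_before P A B x \<le> hit_before P A B' x"
  using hit_by_antimono_avoid[OF assms]
  by (intro LIMSEQ_le[OF hit_by_tendsto[OF assms(3)] hit_by_tendsto[OF assms(3)]]) auto

definition avoid_by :: "nat set \<Rightarrow> nat \<Rightarrow> nat \<Rightarrow> real" where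
  "avoid_by U n x = measure_pmf.prob (path_pmf P n x) (avoiding U)"

lemma avoid_by_0[simp]: "avoid_by U 0 x = 1"
  by (simp add: avoid_by_def avoiding_def)

lemma avoid_by_Suc: "x \<in> S \<Longrightarrow> avoid_by U (Suc n) x = (\<Sum>y\<in>S. p x y * (if y \<in> U then 0 else avoid_by U n y))"
  unfolding avoid_by_def prob_path_pmf_Suc
  by (rule sum.cong[OF refl]) (auto simp: avoiding_def)

lemma avoid_by_nonneg: "0 \<le> avoid_by U n x" by (simp add: avoid_by_def)

lemma avoid_by_Suc_le: "x \<in> S \<Longrightarrow> avoid_by U (Suc n) x \<le> avoid_by U n x"
proof (induction n arbitrary: x)
  case 0
  have "avoid_by U (Suc 0) x \<le> (\<Sum>y\<in>S. p x y * 1)"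
    unfolding avoid_by_Suc[OF 0] by (intro sum_mono mult_left_mono) (auto simp: trans_p_nonneg)
  then show ?case using sum_trans_p[OF 0] by simp
next
  case (Suc n)
  show ?case unfolding avoid_by_Suc[OF Suc.prems] avoid_by_Suc[OF Suc.prems, of U "Suc n"]
    by (intro sum_mono mult_left_mono) (auto simp: trans_p_nonneg Suc.IH)
qed

definition never_hit :: "nat set \<Rightarrow> nat \<Rightarrow> real" where
  "never_hit U x = (INF n. avoid_by U n x)"

lemma bdd_below_avoid_by: "bdd_below (range (\<lambda>n. avoid_by U n x))"
  by (rule bdd_belowI[of _ 0]) (auto simp: avoid_by_nonneg)

lemma avoid_by_tendsto: "x \<in> S \<Longrightarrow> (\<lambda>n. avoid_by U n x) \<longlonglongrightarrow> never_hit U x"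
  unfolding never_hit_def by (rule LIMSEQ_decseq_INF[OF bdd_below_avoid_by]) (rule decseq_SucI, rule avoid_by_Suc_le)

lemma never_hit_nonneg: "x \<in> S \<Longrightarrow> 0 \<le> never_hit U x"
  using avoid_by_tendsto by (intro LIMSEQ_le_const[OF avoid_by_tendsto]) (auto simp: avoid_by_nonneg)

lemma never_hit_one_step: "x \<in> S \<Longrightarrow> never_hit U x = (\<Sum>y\<in>S. p x y * (if y \<in> U then 0 else never_hit U y))"
proof -
  assume x: "x \<in> S"
  have "(\<lambda>n. avoid_by U (Suc n) x) \<longlonglongrightarrow> never_hit U x" using avoid_by_tendsto[OF x] by (rule LIMSEQ_Suc)
  moreover have "(\<lambda>n. avoid_by U (Suc n) x) \<longlonglongrightarrow> (\<Sum>y\<in>S. p x y * (if y \<in> U then 0 else never_hit U y))"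
    unfolding avoid_by_Suc[OF x]
    by (intro tendsto_sum tendsto_mult tendsto_const) (auto intro: avoid_by_tendsto)
  ultimately show ?thesis by (rule LIMSEQ_unique)
qed

text \<open>Maximum principle: the set where \<open>never_hit U\<close> attains a positive maximum would be
  closed and disjoint from \<open>U\<close>.\<close>

lemma never_hit_eq_0:
  assumes U: "U \<inter> S \<noteq> {}" and x: "x \<in> S"
  shows "never_hit U x = 0"
proof (rule ccontr)
  assume "never_hit U x \<noteq> 0"
  with never_hit_nonneg[OF x, of U] have rx: "never_hit U x > 0" by simp
  define R where "R = Max (never_hit U ` S)"
  have SR: "y \<in> S \<Longrightarrow> never_hit U y \<le> R" for y unfolding R_def using finite_S by simp
  have Rpos: "R > 0" using SR[OF x] rx by simp
  have "R \<in> never_hit U ` S" unfolding R_def using finite_S x by (intro Max_in) auto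
  then obtain x0 where x0: "x0 \<in> S" "never_hit U x0 = R" by auto
  have succ: "y \<notin> U \<and> never_hit U y = R" if xS: "x' \<in> S" and xR: "never_hit U x' = R" and y: "y \<in> set_pmf (P x')" for x' y
  proof -
    define g where "g y = (if y \<in> U then 0 else never_hit U y)" for y
    have gR: "y \<in> S \<Longrightarrow> g y \<le> R" for y using SR Rpos by (simp add: g_def)
    have "(\<Sum>y\<in>S. p x' y * (R - g y)) = R * (\<Sum>y\<in>S. p x' y) - (\<Sum>y\<in>S. p x' y * g y)"
      by (simp add: algebra_simps sum_subtractf sum_distrib_left)
    also have "\<dots> = 0" using sum_trans_p[OF xS] never_hit_one_step[OF xS] xR by (simp add: g_def)
    finally have s0: "(\<Sum>y\<in>S. p x' y * (R - g y)) = 0" .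
    have "\<forall>y\<in>S. p x' y * (R - g y) = 0"
      using s0 sum_nonneg_eq_0_iff[OF finite_S, of "\<lambda>y. p x' y * (R - g y)"] gR trans_p_nonneg
      by (simp add: mult_nonneg_nonneg)
    moreover have "y \<in> S" using closed_S[OF xS] y by auto
    moreover have "p x' y > 0" using y by (simp add: trans_p_def pmf_positive)
    ultimately have "g y = R" by force
    then show ?thesis using Rpos by (auto simp: g_def split: if_splits)
  qed
  define W where "W = {y\<in>S. y \<notin> U \<and> never_hit U y = R}"
  have Wc: "set_pmf (P y) \<subseteq> W" if "y \<in> W" for y
    using succ that closed_S unfolding W_def by blast
  obtain y1 where y1: "y1 \<in> set_pmf (P x0)" using set_pmf_not_empty by fastforce
  have y1W: "y1 \<in> W" using succ[OF x0 y1] closed_S[OF x0(1)] y1 unfolding W_def by auto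
  obtain u where u: "u \<in> U" "u \<in> S" using U by auto
  have "u \<in> W" using closed_subset_contains[OF Wc _ y1W u(2)] unfolding W_def by blast
  then show False using u(1) unfolding W_def by blast
qed

lemma avoid_by_tendsto_0: "U \<inter> S \<noteq> {} \<Longrightarrow> x \<in> S \<Longrightarrow> (\<lambda>n. avoid_by U n x) \<longlonglongrightarrow> 0"
  using avoid_by_tendsto never_hit_eq_0 by metis

lemma sum_hit_by_add_avoid_by:
  fixes C :: "nat \<Rightarrow> nat set"
  assumes disj: "\<And>i j. i<K \<Longrightarrow> j<K \<Longrightarrow> i\<noteq>j \<Longrightarrow> C i \<inter> C j = {}"
    and U: "U = (\<Union>j<K. C j)" and x: "x \<in> S"
  shows "(\<Sum>j<K. hit_by (C j) (U - C j) n x) + avoid_by U n x = 1"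
  using x
proof (induction n arbitrary: x)
  case 0 then show ?case by simp
next
  case (Suc n)
  define v where "v j = step_value (C j) (U - C j) (hit_by (C j) (U - C j) n)" for j
  have pt: "(\<Sum>j<K. v j y) + (if y \<in> U then 0 else avoid_by U n y) = 1" if y: "y \<in> S" for y
  proof (cases "y \<in> U")
    case True
    then obtain j0 where j0: "j0 < K" "y \<in> C j0" using U by auto
    have "(\<Sum>j<K. v j y) = (\<Sum>j<K. if j = j0 then 1 else 0)"
      using disj j0 True by (intro sum.cong) (auto simp: v_def step_value_def)
    then show ?thesis using True j0(1) by simp
  next
    case False
    then have "v j y = hit_by (C j) (U - C j) n y" if "j < K" for j
      unfolding v_def step_value_def using U that by auto
    then show ?thesis using Suc.IH[OF y] False by simp
  qed
  have "(\<Sum>j<K. hit_by (C j) (U - C j) (Suc n) x) + avoid_by U (Suc n) x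
      = (\<Sum>j<K. \<Sum>y\<in>S. p x y * v j y) + (\<Sum>y\<in>S. p x y * (if y \<in> U then 0 else avoid_by U n y))"
    by (simp add: hit_by_Suc[OF Suc.prems] avoid_by_Suc[OF Suc.prems] v_def)
  also have "\<dots> = (\<Sum>y\<in>S. p x y * ((\<Sum>j<K. v j y) + (if y \<in> U then 0 else avoid_by U n y)))"
    by (subst sum.swap) (simp add: sum_distrib_left distrib_left sum.distrib)
  also have "\<dots> = 1" using pt sum_trans_p[OF Suc.prems] by simp
  finally show ?case .
qed

lemma sum_hit_before_eq_1:
  fixes C :: "nat \<Rightarrow> nat set"
  assumes disj: "\<And>i j. i<K \<Longrightarrow> j<K \<Longrightarrow> i\<noteq>j \<Longrightarrow> C i \<inter> C j = {}"
    and U: "U = (\<Union>j<K. C j)" and US: "U \<inter> S \<noteq> {}" and x: "x \<in> S"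
  shows "(\<Sum>j<K. hit_before P (C j) (U - C j) x) = 1"
proof -
  have "(\<lambda>n. (\<Sum>j<K. hit_by (C j) (U - C j) n x) + avoid_by U n x)
      \<longlonglongrightarrow> (\<Sum>j<K. hit_before P (C j) (U - C j) x) + 0"
    by (intro tendsto_add tendsto_sum hit_by_tendsto avoid_by_tendsto_0 x US)
  then show ?thesis
    using sum_hit_by_add_avoid_by[OF disj U x] LIMSEQ_unique[OF _ tendsto_const] by fastforce
qed

lemma hit_before_add_swap:
  assumes AB: "A \<inter> B = {}" and ABS: "(A \<union> B) \<inter> S \<noteq> {}" and x: "x \<in> S"
  shows "hit_before P A B x + hit_before P B A x = 1"
proof -
  define C where "C j = (if j = 0 then A else B)" for j :: nat
  have CU: "(\<Union>j<2. C j) = A \<union> B" by (auto simp: C_def numeral_2_eq_2 lessThan_Suc)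
  have "(\<Sum>j<2. hit_before P (C j) ((\<Union>j<2. C j) - C j) x) = 1"
  proof (rule sum_hit_before_eq_1[OF _ refl])
    show "(\<Union>j<2. C j) \<inter> S \<noteq> {}" using CU ABS by simp
    show "x \<in> S" by fact
    fix i j :: nat assume "i < 2" "j < 2" "i \<noteq> j"
    then have "(i = 0 \<and> j = 1) \<or> (i = 1 \<and> j = 0)" by linarith
    then show "C i \<inter> C j = {}" using AB by (auto simp: C_def)
  qed
  then have "hit_before P (C 0) (A \<union> B - C 0) x + hit_before P (C 1) (A \<union> B - C 1) x = 1"
    unfolding CU by (simp add: numeral_2_eq_2)
  moreover have "A \<union> B - A = B" "A \<union> B - B = A" using AB by auto
  ultimately show ?thesis by (simp add: C_def)
qed

lemma hit_before_eq_0_step: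
  assumes h0: "hit_before P A B y = 0" and y: "y \<in> S" and z: "z \<in> set_pmf (P y)"
  shows "step_value A B (hit_before P A B) z = 0"
proof -
  have zS: "z \<in> S" using closed_S[OF y] z by auto
  have nn: "\<And>z'. z' \<in> S \<Longrightarrow> 0 \<le> p y z' * step_value A B (hit_before P A B) z'"
    using hit_before_nonneg trans_p_nonneg by (simp add: step_value_def)
  have "(\<Sum>z'\<in>S. p y z' * step_value A B (hit_before P A B) z') = 0"
    using hit_before_one_step[OF y, of A B] h0 by simp
  then have "\<forall>z'\<in>S. p y z' * step_value A B (hit_before P A B) z' = 0"
    using sum_nonneg_eq_0_iff[OF finite_S nn] by simp
  then have "p y z * step_value A B (hit_before P A B) z = 0" using zS by blast
  moreover have "p y z > 0" using z by (simp add: trans_p_def pmf_positive)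
  ultimately show ?thesis by simp
qed

text \<open>If \<open>hit_before P A B\<close> vanished on \<open>B\<close>, the chain started in \<open>B\<close> could never reach \<open>A\<close>.\<close>

lemma exists_hit_before_pos:
  assumes AB: "A \<inter> B = {}" and BS: "B \<subseteq> S" and "B \<noteq> {}" and AS: "A \<inter> S \<noteq> {}"
  shows "\<exists>x\<in>B. 0 < hit_before P A B x"
proof (rule ccontr)
  assume "\<not> (\<exists>x\<in>B. 0 < hit_before P A B x)"
  then have hB: "x \<in> B \<Longrightarrow> hit_before P A B x = 0" for x using hit_before_nonneg[of A B x] by force
  define W where "W = {y\<in>S. y \<notin> A \<and> (y \<in> B \<or> hit_before P A B y = 0)}"
  have "set_pmf (P y) \<subseteq> W" if y: "y \<in> W" for y
  proof
    fix z assume z: "z \<in> set_pmf (P y)"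
    have "hit_before P A B y = 0" using y hB by (auto simp: W_def)
    then have "step_value A B (hit_before P A B) z = 0"
      using hit_before_eq_0_step[OF _ _ z] y by (simp add: W_def)
    moreover have "z \<in> S" using closed_S y z by (auto simp: W_def)
    ultimately show "z \<in> W" using AB unfolding W_def step_value_def by (auto split: if_splits)
  qed
  moreover obtain b u where "b \<in> B" "u \<in> A" "u \<in> S" using \<open>B \<noteq> {}\<close> AS by auto
  ultimately have "u \<in> W" using closed_subset_contains[of W b u] BS AB by (auto simp: W_def)
  then show False using \<open>u \<in> A\<close> by (simp add: W_def)
qed

lemma one_sub_hit_before_le:
  assumes AQ: "A \<inter> Q = {}" and BQ: "B \<subseteq> Q" and QS: "Q \<inter> S \<noteq> {}" and y: "y \<in> S"
  shows "1 - hit_before P Q A y \<le> hit_before P A B y"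
proof -
  have "hit_before P Q A y + hit_before P A Q y = 1"
    using hit_before_add_swap[of Q A y] AQ QS y by (auto simp: Int_commute)
  moreover have "hit_before P A Q y \<le> hit_before P A B y"
    using hit_before_antimono_avoid[of A Q B y] AQ BQ y by auto
  ultimately show ?thesis by simp
qed

end

section \<open>Weighted variances and entropy\<close>

lemma sum_weighted_dev_sq:
  fixes \<nu> g :: "'a \<Rightarrow> real"
  assumes "sum \<nu> X = 1"
  shows "(\<Sum>x\<in>X. \<nu> x * (g x - c)\<^sup>2)
    = (\<Sum>x\<in>X. \<nu> x * (g x)\<^sup>2) - (\<Sum>x\<in>X. \<nu> x * g x)\<^sup>2 + ((\<Sum>x\<in>X. \<nu> x * g x) - c)\<^sup>2"
proof -
  have "(\<Sum>x\<in>X. \<nu> x * (g x - c)\<^sup>2)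
      = (\<Sum>x\<in>X. \<nu> x * (g x)\<^sup>2) - 2 * c * (\<Sum>x\<in>X. \<nu> x * g x) + c\<^sup>2 * sum \<nu> X"
    by (simp add: power2_eq_square algebra_simps sum.distrib sum_subtractf sum_distrib_left)
  then show ?thesis using assms by (simp add: power2_eq_square algebra_simps)
qed

lemma weighted_mean_sq_le:
  fixes \<nu> g :: "'a \<Rightarrow> real"
  assumes "\<And>x. x \<in> X \<Longrightarrow> 0 \<le> \<nu> x" "sum \<nu> X = 1"
  shows "(\<Sum>x\<in>X. \<nu> x * g x)\<^sup>2 \<le> (\<Sum>x\<in>X. \<nu> x * (g x)\<^sup>2)"
proof -
  have "0 \<le> (\<Sum>x\<in>X. \<nu> x * (g x - (\<Sum>x\<in>X. \<nu> x * g x))\<^sup>2)"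
    using assms(1) by (intro sum_nonneg mult_nonneg_nonneg) auto
  then show ?thesis unfolding sum_weighted_dev_sq[OF assms(2)] by simp
qed

lemma weighted_variance_le_sum_dev_sq:
  fixes \<nu> g :: "'a \<Rightarrow> real"
  assumes "sum \<nu> X = 1"
  shows "(\<Sum>x\<in>X. \<nu> x * (g x)\<^sup>2) - (\<Sum>x\<in>X. \<nu> x * g x)\<^sup>2 \<le> (\<Sum>x\<in>X. \<nu> x * (g x - c)\<^sup>2)"
  unfolding sum_weighted_dev_sq[OF assms] by simp

text \<open>For nonnegative \<open>g\<close> the mean \<open>a\<close> lies between \<open>0\<close> and the root mean square \<open>q\<close>, and
  centring at \<open>q\<close> costs \<open>2q(q - a) \<le> 2(q + a)(q - a)\<close>.\<close>

lemma sum_dev_root_mean_sq_le: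
  fixes \<nu> g :: "'a \<Rightarrow> real"
  assumes "\<And>x. x \<in> X \<Longrightarrow> 0 \<le> \<nu> x" "sum \<nu> X = 1" "\<And>x. x \<in> X \<Longrightarrow> 0 \<le> g x"
  defines "s \<equiv> \<Sum>x\<in>X. \<nu> x * (g x)\<^sup>2" and "a \<equiv> \<Sum>x\<in>X. \<nu> x * g x"
  shows "(\<Sum>x\<in>X. \<nu> x * (g x - sqrt s)\<^sup>2) \<le> 2 * (s - a\<^sup>2)"
proof -
  have a0: "0 \<le> a" unfolding a_def using assms(1,3) by (intro sum_nonneg mult_nonneg_nonneg) auto
  have "a\<^sup>2 \<le> s" unfolding a_def s_def by (rule weighted_mean_sq_le[OF assms(1,2)])
  then have q: "(sqrt s)\<^sup>2 = s" "a \<le> sqrt s"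
    using a0 real_le_rsqrt order_trans[OF zero_le_power2[of a]] by auto
  have "(\<Sum>x\<in>X. \<nu> x * (g x - sqrt s)\<^sup>2) = 2 * sqrt s * (sqrt s - a)"
    unfolding sum_weighted_dev_sq[OF assms(2)] s_def[symmetric] a_def[symmetric]
    using q(1) by (simp add: power2_eq_square algebra_simps)
  also have "\<dots> \<le> 2 * ((sqrt s + a) * (sqrt s - a))" using q a0 by (simp add: mult_right_mono)
  also have "\<dots> = 2 * (s - a\<^sup>2)" using q(1) by (simp add: power2_eq_square algebra_simps)
  finally show ?thesis .
qed

lemma entropy_integrand_le:
  fixes t L :: real
  assumes t: "0 \<le> t" and L1: "1 \<le> L" and L2: "1 \<le> t \<Longrightarrow> 1 + 2 * ln t \<le> L"
  shows "t\<^sup>2 * ln (t\<^sup>2) - t\<^sup>2 + 1 \<le> 3 * (t - 1)\<^sup>2 * L"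
proof -
  consider "t = 0" | "0 < t" "t \<le> 1" | "1 \<le> t" using t by linarith
  then show ?thesis
  proof cases
    case 1 then show ?thesis using L1 by simp
  next
    case 2
    have "t\<^sup>2 * ln (t\<^sup>2) \<le> t\<^sup>2 * (2 * (t - 1))"
      using 2 ln_le_minus_one[of t] by (intro mult_left_mono) (auto simp: ln_realpow)
    then have "t\<^sup>2 * ln (t\<^sup>2) - t\<^sup>2 + 1 \<le> (t - 1)\<^sup>2 * (2 * t + 1)"
      by (simp add: power2_eq_square algebra_simps)
    also have "\<dots> \<le> (t - 1)\<^sup>2 * 3" using 2 by (intro mult_left_mono) auto
    also have "\<dots> \<le> 3 * (t - 1)\<^sup>2 * L" using mult_left_mono[OF L1, of "3 * (t - 1)\<^sup>2"] by (simp add: mult.commute)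
    finally show ?thesis .
  next
    case 3
    have l0: "0 \<le> ln t" using 3 by simp
    have l2: "ln (t\<^sup>2) = 2 * ln t" using 3 by (simp add: ln_realpow)
    have "(4 * (t - 1) + 2) * ln t \<le> (4 * (t - 1) + 2) * (t - 1)"
      using 3 ln_le_minus_one[of t] by (intro mult_left_mono) auto
    then have "t\<^sup>2 * ln (t\<^sup>2) - t\<^sup>2 + 1 \<le> (t - 1)\<^sup>2 * (3 + 2 * ln t)"
      unfolding l2 by (simp add: power2_eq_square algebra_simps)
    also have "\<dots> \<le> (t - 1)\<^sup>2 * (3 * (1 + 2 * ln t))" using l0 by (intro mult_left_mono) auto
    also have "\<dots> \<le> (t - 1)\<^sup>2 * (3 * L)" using L2[OF 3] by (intro mult_left_mono) auto
    finally show ?thesis by (simp add: algebra_simps)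
  qed
qed

lemma log_weight_bounds:
  fixes t \<nu> :: real
  assumes \<nu>: "0 < \<nu>" "\<nu> \<le> 1"
  shows "1 \<le> ln (1 + exp 2 / \<nu>)"
    and "1 \<le> t \<Longrightarrow> \<nu> * t\<^sup>2 \<le> 1 \<Longrightarrow> 1 + 2 * ln t \<le> ln (1 + exp 2 / \<nu>)"
proof -
  have pos: "0 < 1 + exp 2 / \<nu>" using \<nu> by (simp add: add_pos_pos)
  have "exp 2 \<le> exp 2 / \<nu>" using \<nu> by (simp add: le_divide_eq)
  then have "ln (exp 2) \<le> ln (1 + exp 2 / \<nu>)" using pos by (subst ln_le_cancel_iff) auto
  then show "1 \<le> ln (1 + exp 2 / \<nu>)" by simp
  assume t1: "1 \<le> t" and mass: "\<nu> * t\<^sup>2 \<le> 1"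
  have "1 + 2 * ln t = ln (exp 1 * t\<^sup>2)" using t1 by (simp add: ln_mult ln_realpow)
  also have "\<dots> \<le> ln (exp 1 / \<nu>)"
  proof -
    have "t\<^sup>2 \<le> 1 / \<nu>" using mass \<nu> by (simp add: le_divide_eq mult.commute)
    then show ?thesis using t1 \<nu> by (subst ln_le_cancel_iff) (auto simp: divide_inverse)
  qed
  also have "\<dots> \<le> ln (1 + exp 2 / \<nu>)"
  proof -
    have "exp 1 \<le> exp (2::real)" by simp
    then have "exp 1 / \<nu> \<le> 1 + exp 2 / \<nu>" using \<nu> by (simp add: divide_right_mono add_increasing)
    then show ?thesis using pos \<nu> by (subst ln_le_cancel_iff) auto
  qed
  finally show "1 + 2 * ln t \<le> ln (1 + exp 2 / \<nu>)" .
qed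

lemma entropy_sq_normalized_le:
  fixes \<nu> t :: "'a \<Rightarrow> real"
  assumes finX: "finite X" and \<nu>pos: "\<And>x. x \<in> X \<Longrightarrow> 0 < \<nu> x" and \<nu>sum: "sum \<nu> X = 1"
    and tnn: "\<And>x. x \<in> X \<Longrightarrow> 0 \<le> t x" and t2: "(\<Sum>x\<in>X. \<nu> x * (t x)\<^sup>2) = 1"
    and Cm: "\<And>x. x \<in> X \<Longrightarrow> ln (1 + exp 2 / \<nu> x) \<le> Cm"
  shows "(\<Sum>x\<in>X. \<nu> x * ((t x)\<^sup>2 * ln ((t x)\<^sup>2))) \<le> 3 * Cm * (\<Sum>x\<in>X. \<nu> x * (t x - 1)\<^sup>2)"
proof -
  have "(\<Sum>x\<in>X. \<nu> x * ((t x)\<^sup>2 * ln ((t x)\<^sup>2)))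
      = (\<Sum>x\<in>X. \<nu> x * ((t x)\<^sup>2 * ln ((t x)\<^sup>2) - (t x)\<^sup>2 + 1))"
    using t2 \<nu>sum by (simp add: algebra_simps sum.distrib sum_subtractf)
  also have "\<dots> \<le> (\<Sum>x\<in>X. \<nu> x * (3 * Cm * (t x - 1)\<^sup>2))"
  proof (intro sum_mono mult_left_mono)
    fix x assume x: "x \<in> X"
    have "\<nu> x \<le> 1" using member_le_sum[of x X \<nu>] \<nu>pos finX \<nu>sum x by (auto intro: less_imp_le)
    moreover have "\<nu> x * (t x)\<^sup>2 \<le> 1"
      using member_le_sum[of x X "\<lambda>x. \<nu> x * (t x)\<^sup>2"] \<nu>pos finX x t2 by (simp add: less_imp_le)
    ultimately have "(t x)\<^sup>2 * ln ((t x)\<^sup>2) - (t x)\<^sup>2 + 1 \<le> 3 * (t x - 1)\<^sup>2 * ln (1 + exp 2 / \<nu> x)"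
      using tnn[OF x] log_weight_bounds[OF \<nu>pos[OF x]] by (intro entropy_integrand_le) auto
    also have "\<dots> \<le> 3 * (t x - 1)\<^sup>2 * Cm" using Cm[OF x] by (intro mult_left_mono) auto
    finally show "(t x)\<^sup>2 * ln ((t x)\<^sup>2) - (t x)\<^sup>2 + 1 \<le> 3 * Cm * (t x - 1)\<^sup>2" by (simp add: ac_simps)
  qed (use \<nu>pos in \<open>auto intro: less_imp_le\<close>)
  finally show ?thesis by (simp add: sum_distrib_left ac_simps)
qed

lemma entropy_sq_homogeneous:
  fixes \<nu> t :: "'a \<Rightarrow> real"
  assumes q: "0 < q" and t2: "(\<Sum>x\<in>X. \<nu> x * (t x)\<^sup>2) = 1"
  shows "(\<Sum>x\<in>X. \<nu> x * ((q * t x)\<^sup>2 * ln ((q * t x)\<^sup>2))) - q\<^sup>2 * ln (q\<^sup>2)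
    = q\<^sup>2 * (\<Sum>x\<in>X. \<nu> x * ((t x)\<^sup>2 * ln ((t x)\<^sup>2)))"
proof -
  have "(q * t x)\<^sup>2 * ln ((q * t x)\<^sup>2) = q\<^sup>2 * (t x)\<^sup>2 * ln (q\<^sup>2) + q\<^sup>2 * ((t x)\<^sup>2 * ln ((t x)\<^sup>2))" for x
    using q by (cases "t x = 0") (simp_all add: power_mult_distrib ln_mult algebra_simps)
  then have "(\<Sum>x\<in>X. \<nu> x * ((q * t x)\<^sup>2 * ln ((q * t x)\<^sup>2)))
      = q\<^sup>2 * ln (q\<^sup>2) * (\<Sum>x\<in>X. \<nu> x * (t x)\<^sup>2) + q\<^sup>2 * (\<Sum>x\<in>X. \<nu> x * ((t x)\<^sup>2 * ln ((t x)\<^sup>2)))"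
    by (simp add: sum.distrib sum_distrib_left algebra_simps)
  then show ?thesis using t2 by simp
qed

lemma entropy_sq_le_sum_dev_root_mean_sq:
  fixes \<nu> h :: "'a \<Rightarrow> real"
  assumes finX: "finite X" and \<nu>pos: "\<And>x. x \<in> X \<Longrightarrow> 0 < \<nu> x" and \<nu>sum: "sum \<nu> X = 1"
    and hnn: "\<And>x. x \<in> X \<Longrightarrow> 0 \<le> h x"
    and Cm: "\<And>x. x \<in> X \<Longrightarrow> ln (1 + exp 2 / \<nu> x) \<le> Cm"
  defines "s \<equiv> \<Sum>x\<in>X. \<nu> x * (h x)\<^sup>2"
  shows "(\<Sum>x\<in>X. \<nu> x * ((h x)\<^sup>2 * ln ((h x)\<^sup>2))) - s * ln s
    \<le> 3 * Cm * (\<Sum>x\<in>X. \<nu> x * (h x - sqrt s)\<^sup>2)"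
proof (cases "s = 0")
  case True
  then have "x \<in> X \<Longrightarrow> h x = 0" for x
    using sum_nonneg_eq_0_iff[OF finX, of "\<lambda>x. \<nu> x * (h x)\<^sup>2"] \<nu>pos
    unfolding s_def by (fastforce intro: less_imp_le)
  then show ?thesis using True by simp
next
  case False
  have "0 \<le> s" unfolding s_def using \<nu>pos by (intro sum_nonneg mult_nonneg_nonneg) (auto intro: less_imp_le)
  then have s: "0 < s" using False by simp
  define q where "q = sqrt s"
  define t where "t x = h x / q" for x
  have q: "0 < q" "q\<^sup>2 = s" using s by (auto simp: q_def)
  have ht: "h x = q * t x" for x using q by (simp add: t_def)
  have t2: "(\<Sum>x\<in>X. \<nu> x * (t x)\<^sup>2) = 1"
    using q s by (simp add: t_def power_divide flip: sum_divide_distrib s_def)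
  have "(\<Sum>x\<in>X. \<nu> x * ((h x)\<^sup>2 * ln ((h x)\<^sup>2))) - s * ln s = s * (\<Sum>x\<in>X. \<nu> x * ((t x)\<^sup>2 * ln ((t x)\<^sup>2)))"
    using entropy_sq_homogeneous[OF q(1) t2] unfolding ht q(2) .
  also have "\<dots> \<le> s * (3 * Cm * (\<Sum>x\<in>X. \<nu> x * (t x - 1)\<^sup>2))"
    using entropy_sq_normalized_le[OF finX \<nu>pos \<nu>sum _ t2 Cm] hnn q s by (simp add: t_def)
  also have "\<dots> = 3 * Cm * (\<Sum>x\<in>X. \<nu> x * (h x - q)\<^sup>2)"
  proof -
    have "(h x - q)\<^sup>2 = s * (t x - 1)\<^sup>2" for x by (simp add: ht q(2)[symmetric] power2_eq_square algebra_simps)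
    then show ?thesis by (simp add: sum_distrib_left algebra_simps)
  qed
  finally show ?thesis by (simp add: q_def)
qed

lemma entropy_sq_le_variance:
  fixes \<nu> h :: "'a \<Rightarrow> real"
  assumes finX: "finite X" and \<nu>pos: "\<And>x. x \<in> X \<Longrightarrow> 0 < \<nu> x" and \<nu>sum: "sum \<nu> X = 1"
    and hnn: "\<And>x. x \<in> X \<Longrightarrow> 0 \<le> h x"
    and Cm: "\<And>x. x \<in> X \<Longrightarrow> ln (1 + exp 2 / \<nu> x) \<le> Cm"
  shows "(\<Sum>x\<in>X. \<nu> x * ((h x)\<^sup>2 * ln ((h x)\<^sup>2))) - (\<Sum>x\<in>X. \<nu> x * (h x)\<^sup>2) * ln (\<Sum>x\<in>X. \<nu> x * (h x)\<^sup>2)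
     \<le> 6 * Cm * ((\<Sum>x\<in>X. \<nu> x * (h x)\<^sup>2) - (\<Sum>x\<in>X. \<nu> x * h x)\<^sup>2)"
proof -
  obtain x0 where x0: "x0 \<in> X" using \<nu>sum by fastforce
  have "0 \<le> ln (1 + exp 2 / \<nu> x0)" using \<nu>pos[OF x0] by (intro ln_ge_zero) simp
  then have "0 \<le> Cm" using Cm[OF x0] by linarith
  moreover have "(\<Sum>x\<in>X. \<nu> x * (h x - sqrt (\<Sum>x\<in>X. \<nu> x * (h x)\<^sup>2))\<^sup>2)
      \<le> 2 * ((\<Sum>x\<in>X. \<nu> x * (h x)\<^sup>2) - (\<Sum>x\<in>X. \<nu> x * h x)\<^sup>2)" (is "?D \<le> 2 * ?V")
    using \<nu>pos by (intro sum_dev_root_mean_sq_le \<nu>sum hnn) (auto intro: less_imp_le)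
  ultimately have "3 * Cm * ?D \<le> 6 * Cm * ?V" using mult_left_mono[of ?D "2 * ?V" "3 * Cm"] by (simp add: algebra_simps)
  moreover have "(\<Sum>x\<in>X. \<nu> x * ((h x)\<^sup>2 * ln ((h x)\<^sup>2))) - (\<Sum>x\<in>X. \<nu> x * (h x)\<^sup>2) * ln (\<Sum>x\<in>X. \<nu> x * (h x)\<^sup>2)
      \<le> 3 * Cm * (\<Sum>x\<in>X. \<nu> x * (h x - sqrt (\<Sum>x\<in>X. \<nu> x * (h x)\<^sup>2))\<^sup>2)"
    by (rule entropy_sq_le_sum_dev_root_mean_sq[OF finX \<nu>pos \<nu>sum hnn Cm])
  ultimately show ?thesis by linarith
qed

section \<open>Dyadic slices\<close>

lemma dyadic_interval:
  fixes a s :: real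
  assumes "0 < a" "a \<le> s" "s < a * 2 ^ Suc N"
  shows "\<exists>k\<le>N. a * 2 ^ k \<le> s \<and> s < a * 2 ^ Suc k"
  using assms(3)
proof (induction N)
  case 0 then show ?case using assms(2) by auto
next
  case (Suc N)
  show ?case
  proof (cases "s < a * 2 ^ Suc N")
    case True then show ?thesis using Suc.IH le_SucI by blast
  next
    case False then show ?thesis using Suc.prems by (intro exI[of _ "Suc N"]) auto
  qed
qed

lemma sq_le_dyadic_layers:
  fixes w :: "'a \<Rightarrow> real"
  assumes finT: "finite T" and wnn: "\<And>x. x \<in> T \<Longrightarrow> 0 \<le> w x"
  obtains a N where "0 < a"
    "\<And>x. x \<in> T \<Longrightarrow> (w x)\<^sup>2 \<le> 4 * (\<Sum>k\<le>N. (a * 2 ^ k)\<^sup>2 * (if a * 2 ^ k \<le> w x then 1 else 0))"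
proof -
  define a where "a = Min (insert 1 (w ` {x\<in>T. 0 < w x}))"
  have apos: "0 < a" unfolding a_def using finT by (subst Min_gr_iff) auto
  have ale: "x \<in> T \<Longrightarrow> 0 < w x \<Longrightarrow> a \<le> w x" for x
    unfolding a_def using finT by (intro Min_le) auto
  obtain N where N: "(\<Sum>x\<in>T. w x) / a < 2 ^ N" using real_arch_pow[of 2] by auto
  have wlt: "w x < a * 2 ^ Suc N" if x: "x \<in> T" for x
  proof -
    have "w x \<le> (\<Sum>x\<in>T. w x)" using member_le_sum[of x T w] finT x wnn by force
    also have "\<dots> < a * 2 ^ N" using N apos by (simp add: pos_divide_less_eq mult.commute)
    also have "\<dots> \<le> a * 2 ^ Suc N" using apos by simp
    finally show ?thesis .
  qed
  have "(w x)\<^sup>2 \<le> 4 * (\<Sum>k\<le>N. (a * 2 ^ k)\<^sup>2 * (if a * 2 ^ k \<le> w x then 1 else 0))" if x: "x \<in> T" for x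
  proof (cases "w x = 0")
    case True then show ?thesis by (simp add: sum_nonneg)
  next
    case False
    then have "0 < w x" using wnn[OF x] by simp
    then obtain k where k: "k \<le> N" "a * 2 ^ k \<le> w x" "w x < a * 2 ^ Suc k"
      using dyadic_interval[OF apos ale[OF x] wlt[OF x]] by blast
    have "(w x)\<^sup>2 \<le> (2 * (a * 2 ^ k))\<^sup>2" using k \<open>0 < w x\<close> by (intro power_mono) auto
    also have "\<dots> = 4 * ((a * 2 ^ k)\<^sup>2 * (if a * 2 ^ k \<le> w x then 1 else 0))"
      using k by (simp add: power2_eq_square)
    also have "\<dots> \<le> 4 * (\<Sum>k\<le>N. (a * 2 ^ k)\<^sup>2 * (if a * 2 ^ k \<le> w x then 1 else 0))"
      using k by (intro mult_left_mono member_le_sum) auto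
    finally show ?thesis .
  qed
  then show ?thesis using apos that by blast
qed

text \<open>\<open>slice t s\<close> is the length of \<open>[t/2, t] \<inter> (-\<infinity>, s]\<close>; over dyadic \<open>t\<close> these telescope.\<close>

definition slice :: "real \<Rightarrow> real \<Rightarrow> real" where "slice t s = min (t/2) (max 0 (s - t/2))"

lemma slice_mono: "u \<le> v \<Longrightarrow> slice t u \<le> slice t v"
  unfolding slice_def by (intro min.mono max.mono) auto

lemma sum_slice_telescope:
  fixes a :: real assumes "0 < a"
  shows "(\<Sum>k\<le>N. slice (a * 2 ^ k) s) = min (a * 2 ^ N) (max (a/2) s) - a/2"
proof (induction N)
  case 0 then show ?case by (simp add: slice_def min_def max_def)
next
  case (Suc N)
  have "(1::real) \<le> 2 ^ N" by simp
  then have "a \<le> a * 2 ^ N" using assms by simp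
  moreover have "a/2 < a" using assms by simp
  ultimately have pos: "a/2 < a * 2 ^ N" by linarith
  have gen: "0 < b \<Longrightarrow> b < T \<Longrightarrow> min ((2*T)/2) (max 0 (s - (2*T)/2)) = min (2*T) (max b s) - min T (max b s)" for b T :: real
    by (simp add: min_def max_def)
  have "slice (a * 2 ^ Suc N) s = min (a * 2 ^ Suc N) (max (a/2) s) - min (a * 2 ^ N) (max (a/2) s)"
    using gen[OF _ pos] assms unfolding slice_def by (simp add: mult.commute mult.left_commute)
  then show ?case using Suc.IH by simp
qed

lemma sum_squares_le_square_sum:
  fixes d :: "'a \<Rightarrow> real"
  assumes "finite I" "\<And>i. i \<in> I \<Longrightarrow> 0 \<le> d i"
  shows "(\<Sum>i\<in>I. (d i)\<^sup>2) \<le> (\<Sum>i\<in>I. d i)\<^sup>2"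
proof -
  have "(\<Sum>i\<in>I. (d i)\<^sup>2) \<le> (\<Sum>i\<in>I. d i * (\<Sum>j\<in>I. d j))"
    unfolding power2_eq_square
    by (intro sum_mono mult_left_mono member_le_sum) (use assms in auto)
  also have "\<dots> = (\<Sum>i\<in>I. d i)\<^sup>2" by (simp add: power2_eq_square sum_distrib_right)
  finally show ?thesis .
qed

lemma sum_slice_diff_sq_le_ordered:
  fixes a :: real assumes "0 < a" "v \<le> u"
  shows "(\<Sum>k\<le>N. (slice (a * 2 ^ k) u - slice (a * 2 ^ k) v)\<^sup>2) \<le> (u - v)\<^sup>2"
proof -
  have "(\<Sum>k\<le>N. (slice (a * 2 ^ k) u - slice (a * 2 ^ k) v)\<^sup>2) \<le> (\<Sum>k\<le>N. slice (a * 2 ^ k) u - slice (a * 2 ^ k) v)\<^sup>2"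
    by (rule sum_squares_le_square_sum) (use assms slice_mono in auto)
  also have "(\<Sum>k\<le>N. slice (a * 2 ^ k) u - slice (a * 2 ^ k) v)
     = (min (a * 2 ^ N) (max (a/2) u) - a/2) - (min (a * 2 ^ N) (max (a/2) v) - a/2)"
    by (simp add: sum_subtractf sum_slice_telescope[OF assms(1)])
  also have "(\<dots>)\<^sup>2 \<le> (u - v)\<^sup>2"
    using assms(2) by (intro power_mono) (auto simp: min_def max_def)
  finally show ?thesis .
qed

lemma sum_slice_diff_sq_le:
  fixes a :: real assumes "0 < a"
  shows "(\<Sum>k\<le>N. (slice (a * 2 ^ k) u - slice (a * 2 ^ k) v)\<^sup>2) \<le> (u - v)\<^sup>2"
proof (cases "v \<le> u")
  case True then show ?thesis using sum_slice_diff_sq_le_ordered[OF assms] by blast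
next
  case False
  then have "(\<Sum>k\<le>N. (slice (a * 2 ^ k) v - slice (a * 2 ^ k) u)\<^sup>2) \<le> (v - u)\<^sup>2"
    using sum_slice_diff_sq_le_ordered[OF assms] by simp
  then show ?thesis by (simp add: power2_commute)
qed

lemma ramp_eq_slice:
  fixes t s :: real assumes "0 < t"
  shows "min 1 (max 0 (2 * s / t - 1)) = (2 / t) * slice t s"
  using assms unfolding slice_def
  by (auto simp: min_def max_def field_simps)

section \<open>Energy, capacity and Maz'ya's inequality\<close>

locale reversible_chain = finite_chain +
  fixes \<mu> :: "nat \<Rightarrow> real"
  assumes mu_pos: "\<And>x. x\<in>S \<Longrightarrow> 0 < \<mu> x"
    and stationary: "\<And>y. y\<in>S \<Longrightarrow> (\<Sum>x\<in>S. \<mu> x * p x y) = \<mu> y"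
    and reversible: "\<And>x y. x\<in>S \<Longrightarrow> y\<in>S \<Longrightarrow> \<mu> x * p x y = \<mu> y * p y x"
begin

definition energy :: "(nat \<Rightarrow> real) \<Rightarrow> real" where
  "energy u = (1/2) * (\<Sum>x\<in>S. \<Sum>y\<in>S. \<mu> x * p x y * (u x - u y)\<^sup>2)"

definition energy_form :: "(nat \<Rightarrow> real) \<Rightarrow> (nat \<Rightarrow> real) \<Rightarrow> real" where
  "energy_form u v = (1/2) * (\<Sum>x\<in>S. \<Sum>y\<in>S. \<mu> x * p x y * ((u x - u y) * (v x - v y)))"

definition generator :: "(nat \<Rightarrow> real) \<Rightarrow> nat \<Rightarrow> real" where
  "generator v x = (\<Sum>y\<in>S. p x y * v y) - v x"

lemma energy_eq_energy_form: "energy u = energy_form u u" by (simp add: energy_def energy_form_def power2_eq_square)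

lemma energy_nonneg: "0 \<le> energy u"
  unfolding energy_def using mu_pos trans_p_nonneg
  by (intro mult_nonneg_nonneg sum_nonneg) (auto intro: mult_nonneg_nonneg less_imp_le)

lemma energy_form_commute: "energy_form u v = energy_form v u" by (simp add: energy_form_def mult.commute)

lemma energy_add: "energy (\<lambda>x. g x + w x) = energy g + 2 * energy_form g w + energy w"
proof -
  have pt: "\<mu> x * p x y * ((g x + w x) - (g y + w y))\<^sup>2 = \<mu> x * p x y * (g x - g y)\<^sup>2
     + 2 * (\<mu> x * p x y * ((g x - g y) * (w x - w y))) + \<mu> x * p x y * (w x - w y)\<^sup>2" for x y
    by (simp add: power2_eq_square algebra_simps)
  have "(\<Sum>x\<in>S. \<Sum>y\<in>S. \<mu> x * p x y * ((g x + w x) - (g y + w y))\<^sup>2)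
    = (\<Sum>x\<in>S. \<Sum>y\<in>S. \<mu> x * p x y * (g x - g y)\<^sup>2)
      + 2 * (\<Sum>x\<in>S. \<Sum>y\<in>S. \<mu> x * p x y * ((g x - g y) * (w x - w y)))
      + (\<Sum>x\<in>S. \<Sum>y\<in>S. \<mu> x * p x y * (w x - w y)\<^sup>2)"
    by (simp only: pt sum.distrib sum_distrib_left)
  then show ?thesis unfolding energy_def energy_form_def by (simp add: algebra_simps)
qed

lemma energy_scale: "energy (\<lambda>x. c * u x) = c\<^sup>2 * energy u"
  unfolding energy_def
  by (simp add: power2_eq_square algebra_simps sum_distrib_left)

lemma energy_le_pointwise:
  assumes "\<And>x y. x \<in> S \<Longrightarrow> y \<in> S \<Longrightarrow> (u x - u y)\<^sup>2 \<le> g x y"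
  shows "energy u \<le> (1/2) * (\<Sum>x\<in>S. \<Sum>y\<in>S. \<mu> x * p x y * g x y)"
proof -
  have "\<mu> x * p x y * (u x - u y)\<^sup>2 \<le> \<mu> x * p x y * g x y" if "x \<in> S" "y \<in> S" for x y
  proof (rule mult_left_mono)
    show "0 \<le> \<mu> x * p x y" using mu_pos[OF that(1)] trans_p_nonneg[of x y] by simp
  qed (rule assms[OF that])
  then show ?thesis unfolding energy_def by (simp add: sum_mono)
qed

lemma energy_contraction:
  assumes "\<And>x y. \<bar>u x - u y\<bar> \<le> \<bar>f x - f y\<bar>"
  shows "energy u \<le> energy f"
proof -
  have "(u x - u y)\<^sup>2 \<le> (f x - f y)\<^sup>2" for x y
    using assms[of x y] by (metis abs_ge_zero power2_abs power_mono)
  then show ?thesis using energy_le_pointwise[of u "\<lambda>x y. (f x - f y)\<^sup>2"] by (simp add: energy_def)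
qed

lemma energy_diff_le: "energy (\<lambda>x. u x - v x) \<le> 2 * energy u + 2 * energy v"
proof -
  have "((u x - v x) - (u y - v y))\<^sup>2 \<le> 2 * (u x - u y)\<^sup>2 + 2 * (v x - v y)\<^sup>2" for x y
    using sum_squares_ge_zero[of "u x - u y + (v x - v y)" 0] by (simp add: power2_eq_square algebra_simps)
  then have "energy (\<lambda>x. u x - v x)
      \<le> (1/2) * (\<Sum>x\<in>S. \<Sum>y\<in>S. \<mu> x * p x y * (2 * (u x - u y)\<^sup>2 + 2 * (v x - v y)\<^sup>2))"
    by (intro energy_le_pointwise)
  then show ?thesis by (simp add: energy_def algebra_simps sum.distrib sum_distrib_left)
qed

lemma energy_le_sum_sq: "energy d \<le> 2 * (\<Sum>x\<in>S. \<mu> x * (d x)\<^sup>2)"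
proof -
  have "(d x - d y)\<^sup>2 \<le> 2 * (d x)\<^sup>2 + 2 * (d y)\<^sup>2" for x y
    using sum_squares_ge_zero[of "d x + d y" 0] by (simp add: power2_eq_square algebra_simps)
  then have "energy d \<le> (1/2) * (\<Sum>x\<in>S. \<Sum>y\<in>S. \<mu> x * p x y * (2 * (d x)\<^sup>2 + 2 * (d y)\<^sup>2))"
    by (intro energy_le_pointwise)
  also have "\<dots> = (\<Sum>x\<in>S. \<Sum>y\<in>S. \<mu> x * p x y * (d x)\<^sup>2) + (\<Sum>x\<in>S. \<Sum>y\<in>S. \<mu> x * p x y * (d y)\<^sup>2)"
  proof -
    have "\<mu> x * p x y * (2 * (d x)\<^sup>2 + 2 * (d y)\<^sup>2) = 2 * (\<mu> x * p x y * (d x)\<^sup>2) + 2 * (\<mu> x * p x y * (d y)\<^sup>2)" for x y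
      by (simp add: algebra_simps)
    then show ?thesis by (simp only: sum.distrib sum_distrib_left[symmetric]) simp
  qed
  also have "(\<Sum>x\<in>S. \<Sum>y\<in>S. \<mu> x * p x y * (d x)\<^sup>2) = (\<Sum>x\<in>S. \<mu> x * (d x)\<^sup>2)"
  proof (rule sum.cong[OF refl])
    fix x assume x: "x \<in> S"
    have "(\<Sum>y\<in>S. \<mu> x * p x y * (d x)\<^sup>2) = (\<Sum>y\<in>S. (\<mu> x * (d x)\<^sup>2) * p x y)"
      by (simp add: algebra_simps)
    also have "\<dots> = \<mu> x * (d x)\<^sup>2" by (simp flip: sum_distrib_left add: sum_trans_p[OF x])
    finally show "(\<Sum>y\<in>S. \<mu> x * p x y * (d x)\<^sup>2) = \<mu> x * (d x)\<^sup>2" .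
  qed
  also have "(\<Sum>x\<in>S. \<Sum>y\<in>S. \<mu> x * p x y * (d y)\<^sup>2) = (\<Sum>y\<in>S. \<mu> y * (d y)\<^sup>2)"
    by (subst sum.swap) (simp add: stationary flip: sum_distrib_right)
  finally show ?thesis by simp
qed

lemma energy_vanish_on:
  assumes DS: "D \<subseteq> S"
  shows "energy (\<lambda>x. if x \<in> D then 0 else u x) \<le> 2 * energy u + 4 * (\<Sum>x\<in>D. \<mu> x * (u x)\<^sup>2)"
proof -
  define d where "d x = (if x \<in> D then u x else 0)" for x
  have "energy (\<lambda>x. if x \<in> D then 0 else u x) = energy (\<lambda>x. u x - d x)"
    by (simp add: d_def if_distrib cong: if_cong)
  also have "\<dots> \<le> 2 * energy u + 2 * energy d" by (rule energy_diff_le)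
  also have "energy d \<le> 2 * (\<Sum>x\<in>S. \<mu> x * (d x)\<^sup>2)" by (rule energy_le_sum_sq)
  also have "(\<Sum>x\<in>S. \<mu> x * (d x)\<^sup>2) = (\<Sum>x\<in>D. \<mu> x * (u x)\<^sup>2)"
  proof -
    have "\<mu> x * (d x)\<^sup>2 = (if x \<in> D then \<mu> x * (u x)\<^sup>2 else 0)" for x by (simp add: d_def)
    then show ?thesis using sum.inter_restrict[OF finite_S, of "\<lambda>x. \<mu> x * (u x)\<^sup>2" D] DS
      by (simp add: Int_absorb1)
  qed
  finally show ?thesis by simp
qed

lemma energy_eq_0_imp_step_eq:
  assumes E0: "energy f = 0" and x: "x \<in> S" and y: "y \<in> set_pmf (P x)"
  shows "f y = f x"
proof -
  have yS: "y \<in> S" using closed_S[OF x] y by auto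
  have "(\<Sum>(a, b)\<in>S \<times> S. \<mu> a * p a b * (f a - f b)\<^sup>2) = 0"
    using E0 by (simp add: energy_def sum.cartesian_product)
  moreover have "\<forall>z\<in>S \<times> S. 0 \<le> (case z of (a, b) \<Rightarrow> \<mu> a * p a b * (f a - f b)\<^sup>2)"
    using mu_pos trans_p_nonneg by (auto intro!: mult_nonneg_nonneg simp: less_imp_le)
  ultimately have "\<forall>z\<in>S \<times> S. (case z of (a, b) \<Rightarrow> \<mu> a * p a b * (f a - f b)\<^sup>2) = 0"
    using finite_S by (subst sum_nonneg_eq_0_iff[symmetric]) auto
  then have "\<mu> x * p x y * (f x - f y)\<^sup>2 = 0" using x yS by auto
  moreover have "0 < \<mu> x" "0 < p x y" using mu_pos[OF x] y by (auto simp: trans_p_def pmf_positive)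
  ultimately show ?thesis by simp
qed

lemma energy_eq_0_imp_eq:
  assumes E0: "energy f = 0" and x: "x \<in> S" and y: "y \<in> S"
  shows "f x = f y"
proof -
  define W where "W = {z\<in>S. f z = f x}"
  have "set_pmf (P z) \<subseteq> W" if "z \<in> W" for z
    using that energy_eq_0_imp_step_eq[OF E0] closed_S unfolding W_def by fastforce
  then have "y \<in> W" using closed_subset_contains[of W x y] x y unfolding W_def by blast
  then show ?thesis by (simp add: W_def)
qed

lemma sum_generator_eq_0: "(\<Sum>x\<in>S. \<mu> x * generator v x) = 0"
proof -
  have "(\<Sum>x\<in>S. \<mu> x * generator v x) = (\<Sum>x\<in>S. \<Sum>y\<in>S. \<mu> x * p x y * v y) - (\<Sum>x\<in>S. \<mu> x * v x)"
    by (simp add: generator_def algebra_simps sum_subtractf sum_distrib_left)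
  also have "(\<Sum>x\<in>S. \<Sum>y\<in>S. \<mu> x * p x y * v y) = (\<Sum>y\<in>S. (\<Sum>x\<in>S. \<mu> x * p x y) * v y)"
    by (subst sum.swap) (simp add: sum_distrib_right)
  also have "\<dots> = (\<Sum>y\<in>S. \<mu> y * v y)" by (simp add: stationary)
  finally show ?thesis by simp
qed

lemma energy_form_generator: "energy_form u v = - (\<Sum>x\<in>S. \<mu> x * u x * generator v x)"
proof -
  have s2: "(\<Sum>x\<in>S. \<Sum>y\<in>S. \<mu> x * p x y * (u y * (v x - v y)))
        = (\<Sum>x\<in>S. \<Sum>y\<in>S. \<mu> x * p x y * (u x * (v y - v x)))"
  proof -
    have "(\<Sum>x\<in>S. \<Sum>y\<in>S. \<mu> x * p x y * (u y * (v x - v y)))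
        = (\<Sum>x\<in>S. \<Sum>y\<in>S. \<mu> y * p y x * (u y * (v x - v y)))"
      by (intro sum.cong refl) (simp add: reversible)
    also have "\<dots> = (\<Sum>x\<in>S. \<Sum>y\<in>S. \<mu> x * p x y * (u x * (v y - v x)))"
      by (rule sum.swap)
    finally show ?thesis .
  qed
  have pt1: "\<mu> x * p x y * ((u x - u y) * (v x - v y)) = \<mu> x * p x y * (u x * (v x - v y)) - \<mu> x * p x y * (u y * (v x - v y))" for x y
    by (simp add: algebra_simps)
  have pt2: "\<mu> x * p x y * (u x * (v y - v x)) = - (\<mu> x * p x y * (u x * (v x - v y)))" for x y
    by (simp add: algebra_simps)
  have "(\<Sum>x\<in>S. \<Sum>y\<in>S. \<mu> x * p x y * ((u x - u y) * (v x - v y)))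
      = (\<Sum>x\<in>S. \<Sum>y\<in>S. \<mu> x * p x y * (u x * (v x - v y)))
        - (\<Sum>x\<in>S. \<Sum>y\<in>S. \<mu> x * p x y * (u y * (v x - v y)))"
    by (simp only: pt1 sum_subtractf)
  also have "\<dots> = 2 * (\<Sum>x\<in>S. \<Sum>y\<in>S. \<mu> x * p x y * (u x * (v x - v y)))"
    unfolding s2 by (simp only: pt2 sum_negf)
  also have "(\<Sum>x\<in>S. \<Sum>y\<in>S. \<mu> x * p x y * (u x * (v x - v y))) = (\<Sum>x\<in>S. - (\<mu> x * u x * generator v x))"
  proof (rule sum.cong[OF refl])
    fix x assume x: "x \<in> S"
    have "(\<Sum>y\<in>S. \<mu> x * p x y * (u x * (v x - v y)))
        = \<mu> x * u x * (v x * (\<Sum>y\<in>S. p x y) - (\<Sum>y\<in>S. p x y * v y))"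
      by (simp add: algebra_simps sum_subtractf sum_distrib_left sum_distrib_right)
    then show "(\<Sum>y\<in>S. \<mu> x * p x y * (u x * (v x - v y))) = - (\<mu> x * u x * generator v x)"
      by (simp add: sum_trans_p[OF x] generator_def algebra_simps)
  qed
  finally show ?thesis by (simp add: energy_form_def sum_negf)
qed

lemma generator_step_value:
  assumes "x \<in> S"
  shows "generator (step_value A B (hit_before P A B)) x = hit_before P A B x - step_value A B (hit_before P A B) x"
  unfolding generator_def using hit_before_one_step[OF assms, of A B] by simp

lemma energy_equilibrium_potential:
  assumes AB: "A \<inter> B = {}" and BS: "B \<subseteq> S"
  shows "energy (step_value A B (hit_before P A B)) = (\<Sum>y\<in>B. \<mu> y * hit_before P A B y)"
proof -
  define g where "g = step_value A B (hit_before P A B)"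
  have "\<mu> x * g x * generator g x = \<mu> x * generator g x - (if x \<in> B then \<mu> x * hit_before P A B x else 0)"
    if x: "x \<in> S" for x
    using AB generator_step_value[OF x, of A B] unfolding g_def step_value_def by (auto simp: algebra_simps)
  then have "energy g = (\<Sum>x\<in>S. if x \<in> B then \<mu> x * hit_before P A B x else 0) - (\<Sum>x\<in>S. \<mu> x * generator g x)"
    by (simp add: energy_eq_energy_form energy_form_generator sum_subtractf)
  then show ?thesis
    using sum.inter_restrict[OF finite_S, of "\<lambda>x. \<mu> x * hit_before P A B x" B] BS
    by (simp add: g_def sum_generator_eq_0 Int_absorb1)
qed

text \<open>Dirichlet principle: \<open>v\<close> differs from the equilibrium potential by a function vanishing
  on \<open>A \<union> B\<close>, which is orthogonal to it in the energy form.\<close>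

lemma capacity_le_energy:
  assumes AB: "A \<inter> B = {}" and BS: "B \<subseteq> S"
    and v1: "\<And>x. x \<in> A \<Longrightarrow> v x = 1" and v0: "\<And>x. x \<in> B \<Longrightarrow> v x = 0"
  shows "(\<Sum>y\<in>B. \<mu> y * hit_before P A B y) \<le> energy v"
proof -
  define g where "g = step_value A B (hit_before P A B)"
  define w where "w x = v x - g x" for x
  have "x \<in> S \<Longrightarrow> w x * generator g x = 0" for x
    using v1 v0 AB generator_step_value[of x A B] unfolding w_def g_def step_value_def by auto
  then have "energy_form w g = 0"
    by (simp add: energy_form_generator mult.assoc sum.neutral)
  then have "energy v = energy g + energy w"
    using energy_add[of g w] by (simp add: w_def energy_form_commute)
  then show ?thesis
    using energy_equilibrium_potential[OF AB BS] energy_nonneg[of w] by (simp add: g_def)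
qed

lemma energy_form_equilibrium_potentials:
  assumes BQ: "B \<subseteq> Q" and AQ: "A \<inter> Q = {}"
  shows "energy_form (step_value Q A (hit_before P Q A)) (step_value B (Q - B) (hit_before P B (Q - B))) = 0"
proof -
  define e where "e = step_value Q A (hit_before P Q A)"
  define h where "h = step_value B (Q - B) (hit_before P B (Q - B))"
  have "\<mu> x * e x * generator h x = \<mu> x * generator h x" if x: "x \<in> S" for x
  proof (cases "x \<in> Q")
    case False
    then have "generator h x = 0" using generator_step_value[OF x, of B "Q - B"] BQ by (auto simp: h_def step_value_def)
    then show ?thesis by simp
  qed (use AQ in \<open>auto simp: e_def step_value_def\<close>)
  then have "(\<Sum>x\<in>S. \<mu> x * e x * generator h x) = (\<Sum>x\<in>S. \<mu> x * generator h x)"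
    by (rule sum.cong[OF refl])
  then show ?thesis unfolding e_def[symmetric] h_def[symmetric]
    by (simp add: energy_form_generator sum_generator_eq_0)
qed

text \<open>Reversibility in the form of the symmetry of the energy form: the flow from \<open>A\<close> into \<open>Q\<close>
  through \<open>B\<close> equals the flow from \<open>B\<close> into \<open>A\<close>.\<close>

lemma escape_identity:
  assumes QS: "Q \<subseteq> S" and BQ: "B \<subseteq> Q" and AS: "A \<subseteq> S" and AQ: "A \<inter> Q = {}"
  shows "(\<Sum>x\<in>A. \<mu> x * hit_before P Q A x * hit_before P B (Q - B) x)
       = (\<Sum>y\<in>B. \<mu> y * (1 - hit_before P Q A y))"
proof -
  define e where "e = step_value Q A (hit_before P Q A)"
  define h where "h = step_value B (Q - B) (hit_before P B (Q - B))"
  have "(\<Sum>x\<in>S. \<mu> x * h x * generator e x) = 0"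
    using energy_form_equilibrium_potentials[OF BQ AQ] energy_form_generator[of h e]
    by (simp add: e_def h_def energy_form_commute)
  moreover have "\<mu> x * h x * generator e x = (if x \<in> A then \<mu> x * hit_before P Q A x * hit_before P B (Q - B) x else 0)
      + (if x \<in> B then \<mu> x * (hit_before P Q A x - 1) else 0)" if x: "x \<in> S" for x
    using AQ BQ generator_step_value[OF x, of Q A]
    by (cases "x \<in> Q") (auto simp: e_def h_def step_value_def)
  ultimately have "(\<Sum>x\<in>S. (if x \<in> A then \<mu> x * hit_before P Q A x * hit_before P B (Q - B) x else 0)
      + (if x \<in> B then \<mu> x * (hit_before P Q A x - 1) else 0)) = 0"
    by simp
  then have "(\<Sum>x\<in>A. \<mu> x * hit_before P Q A x * hit_before P B (Q - B) x)
      + (\<Sum>x\<in>B. \<mu> x * (hit_before P Q A x - 1)) = 0"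
    using BQ QS AS by (simp add: sum.distrib flip: sum.inter_restrict[OF finite_S] add: Int_absorb1)
  then show ?thesis by (simp add: algebra_simps sum_subtractf sum_negf)
qed

lemma flow_le_capacity:
  assumes QS: "Q \<subseteq> S" and BQ: "B \<subseteq> Q" and "B \<noteq> {}" and AS: "A \<subseteq> S" and AQ: "A \<inter> Q = {}"
    and v1: "\<And>x. x \<in> A \<Longrightarrow> v x = 1" and v0: "\<And>x. x \<in> B \<Longrightarrow> v x = 0"
  shows "(\<Sum>x\<in>A. \<mu> x * hit_before P Q A x * hit_before P B (Q - B) x) \<le> energy v"
proof -
  have BS: "B \<subseteq> S" using BQ QS by auto
  have "Q \<inter> S \<noteq> {}" using QS BQ \<open>B \<noteq> {}\<close> by auto
  then have "(\<Sum>y\<in>B. \<mu> y * (1 - hit_before P Q A y)) \<le> (\<Sum>y\<in>B. \<mu> y * hit_before P A B y)"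
    using one_sub_hit_before_le[OF AQ BQ] mu_pos BS by (intro sum_mono mult_left_mono) (auto intro: less_imp_le)
  also have "\<dots> \<le> energy v" by (rule capacity_le_energy) (use AQ BQ BS v1 v0 in auto)
  finally show ?thesis using escape_identity[OF QS BQ AS AQ] by simp
qed

lemma sum_energy_slice_le:
  assumes "0 < a"
  shows "(\<Sum>k\<le>N. energy (\<lambda>x. slice (a * 2 ^ k) (w x))) \<le> energy w"
proof -
  have "(\<Sum>k\<le>N. energy (\<lambda>x. slice (a * 2 ^ k) (w x)))
      = (1/2) * (\<Sum>x\<in>S. \<Sum>y\<in>S. \<mu> x * p x y * (\<Sum>k\<le>N. (slice (a * 2 ^ k) (w x) - slice (a * 2 ^ k) (w y))\<^sup>2))"
    unfolding energy_def by (simp add: sum_distrib_left sum.swap[of _ "{..N}"])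
  also have "\<dots> \<le> (1/2) * (\<Sum>x\<in>S. \<Sum>y\<in>S. \<mu> x * p x y * (w x - w y)\<^sup>2)"
    using mu_pos trans_p_nonneg sum_slice_diff_sq_le[OF assms]
    by (intro mult_left_mono sum_mono mult_left_mono) (auto intro: mult_nonneg_nonneg less_imp_le)
  finally show ?thesis by (simp add: energy_def)
qed

lemma level_set_capacity_le:
  assumes cap: "\<And>A v. A \<subseteq> T \<Longrightarrow> A \<noteq> {} \<Longrightarrow> (\<And>x. x\<in>A \<Longrightarrow> v x = 1) \<Longrightarrow> (\<And>x. x\<in>D \<Longrightarrow> v x = 0)
       \<Longrightarrow> \<kappa> * sum \<mu> A \<le> energy v"
    and wD: "\<And>x. x\<in>D \<Longrightarrow> w x = 0" and t: "0 < t"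
  shows "t\<^sup>2 * (\<kappa> * sum \<mu> {x\<in>T. t \<le> w x}) \<le> 4 * energy (\<lambda>x. slice t (w x))"
proof -
  define v where "v x = min 1 (max 0 (2 * w x / t - 1))" for x
  have "\<kappa> * sum \<mu> {x\<in>T. t \<le> w x} \<le> energy v"
  proof (cases "{x\<in>T. t \<le> w x} = {}")
    case True then show ?thesis using energy_nonneg[of v] by (metis mult_zero_right sum.empty)
  next
    case False
    show ?thesis
    proof (rule cap)
      fix x assume "x \<in> {x\<in>T. t \<le> w x}"
      then have "1 \<le> 2 * w x / t - 1" using t by (simp add: field_simps)
      then show "v x = 1" by (simp add: v_def)
    qed (use False wD in \<open>auto simp: v_def\<close>)
  qed
  also have "energy v = (2 / t)\<^sup>2 * energy (\<lambda>x. slice t (w x))"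
    unfolding v_def ramp_eq_slice[OF t] by (rule energy_scale)
  finally show ?thesis using t by (simp add: power_divide field_simps)
qed

text \<open>Maz'ya's capacitary argument: bound the level sets of \<open>w\<close> at dyadic heights by capacity,
  and the energies of the corresponding slices of \<open>w\<close> add up to at most the energy of \<open>w\<close>.\<close>

lemma mazya_inequality:
  assumes TS: "T \<subseteq> S" and kap: "0 < \<kappa>"
    and cap: "\<And>A v. A \<subseteq> T \<Longrightarrow> A \<noteq> {} \<Longrightarrow> (\<And>x. x\<in>A \<Longrightarrow> v x = 1) \<Longrightarrow> (\<And>x. x\<in>D \<Longrightarrow> v x = 0)
       \<Longrightarrow> \<kappa> * sum \<mu> A \<le> energy v"
    and wnn: "\<And>x. x \<in> T \<Longrightarrow> 0 \<le> w x" and wD: "\<And>x. x\<in>D \<Longrightarrow> w x = 0"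
  shows "\<kappa> * (\<Sum>x\<in>T. \<mu> x * (w x)\<^sup>2) \<le> 16 * energy w"
proof -
  have finT: "finite T" using finite_S TS finite_subset by blast
  obtain a N where apos: "0 < a" and layers:
    "\<And>x. x \<in> T \<Longrightarrow> (w x)\<^sup>2 \<le> 4 * (\<Sum>k\<le>N. (a * 2 ^ k)\<^sup>2 * (if a * 2 ^ k \<le> w x then 1 else 0))"
    using sq_le_dyadic_layers[where w=w, OF finT wnn] by blast
  define t where "t k = a * 2 ^ k" for k :: nat
  have tpos: "0 < t k" for k using apos by (simp add: t_def)
  have "(\<Sum>x\<in>T. \<mu> x * (w x)\<^sup>2) \<le> (\<Sum>x\<in>T. \<mu> x * (4 * (\<Sum>k\<le>N. (t k)\<^sup>2 * (if t k \<le> w x then 1 else 0))))"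
    using layers mu_pos TS unfolding t_def by (intro sum_mono mult_left_mono) (auto intro: less_imp_le)
  also have "\<dots> = 4 * (\<Sum>k\<le>N. (t k)\<^sup>2 * (\<Sum>x\<in>T. if t k \<le> w x then \<mu> x else 0))"
    by (simp add: sum_distrib_left sum_distrib_right sum.swap[of _ T] algebra_simps if_distrib cong: if_cong)
  also have "\<dots> = 4 * (\<Sum>k\<le>N. (t k)\<^sup>2 * sum \<mu> {x\<in>T. t k \<le> w x})"
    using finT by (simp add: sum.inter_filter)
  finally have "\<kappa> * (\<Sum>x\<in>T. \<mu> x * (w x)\<^sup>2) \<le> \<kappa> * (4 * (\<Sum>k\<le>N. (t k)\<^sup>2 * sum \<mu> {x\<in>T. t k \<le> w x}))"
    using less_imp_le[OF kap] by (rule mult_left_mono)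
  also have "\<dots> = 4 * (\<Sum>k\<le>N. (t k)\<^sup>2 * (\<kappa> * sum \<mu> {x\<in>T. t k \<le> w x}))"
    unfolding sum_distrib_left by (simp add: mult.left_commute)
  also have "\<dots> \<le> 4 * (\<Sum>k\<le>N. 4 * energy (\<lambda>x. slice (t k) (w x)))"
  proof -
    have "(t k)\<^sup>2 * (\<kappa> * sum \<mu> {x\<in>T. t k \<le> w x}) \<le> 4 * energy (\<lambda>x. slice (t k) (w x))" for k
      using cap wD tpos by (rule level_set_capacity_le)
    then show ?thesis by (simp add: sum_mono)
  qed
  also have "\<dots> = 16 * (\<Sum>k\<le>N. energy (\<lambda>x. slice (a * 2 ^ k) (w x)))"
    by (simp add: sum_distrib_left t_def)
  also have "\<dots> \<le> 16 * energy w" using sum_energy_slice_le[OF apos, where N=N and w=w] by simp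
  finally show ?thesis .
qed

lemma finite_subset_S: "A \<subseteq> S \<Longrightarrow> finite A"
  by (rule finite_subset[OF _ finite_S])

lemma mass_eq_sum: "A \<subseteq> S \<Longrightarrow> mass \<mu> A = sum \<mu> A"
  unfolding mass_def by (simp add: finite_subset_S)

lemma expect_eq_sum: "A \<subseteq> S \<Longrightarrow> expect \<mu> A g = (\<Sum>x\<in>A. \<mu> x / mass \<mu> A * g x)"
  unfolding expect_def by (simp add: finite_subset_S)

lemma dirichlet_eq_energy: "dirichlet S P \<mu> f = energy f"
proof -
  have "finite (S \<times> S)" using finite_S by simp
  then have "dirichlet S P \<mu> f = (1/2) * (\<Sum>(x,y)\<in>S \<times> S. \<mu> x * p x y * (f x - f y)\<^sup>2)"
    unfolding dirichlet_def by simp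
  also have "\<dots> = energy f" unfolding energy_def by (simp add: sum.cartesian_product)
  finally show ?thesis .
qed

lemma mass_pos: "A \<subseteq> S \<Longrightarrow> A \<noteq> {} \<Longrightarrow> 0 < mass \<mu> A"
proof -
  assume A: "A \<subseteq> S" "A \<noteq> {}"
  have "0 < sum \<mu> A" using A mu_pos by (intro sum_pos finite_subset_S) auto
  then show ?thesis using mass_eq_sum[OF A(1)] by simp
qed

lemma prob_from_eq_sum: "A \<subseteq> S \<Longrightarrow> prob_from \<mu> A h = (\<Sum>x\<in>A. \<mu> x * h x) / sum \<mu> A"
  unfolding prob_from_def by (simp add: finite_subset_S mass_eq_sum)

lemma prob_from_pos:
  assumes AS: "A \<subseteq> S" and hnn: "\<And>x. x \<in> A \<Longrightarrow> 0 \<le> h x" and x: "x \<in> A" "0 < h x"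
  shows "0 < prob_from \<mu> A h"
proof -
  have "0 < (\<Sum>x\<in>A. \<mu> x * h x)"
    using AS x mu_pos hnn by (intro sum_pos2[OF finite_subset_S[OF AS] x(1)]) (auto simp: less_imp_le)
  moreover have "0 < sum \<mu> A" using AS x(1) mu_pos by (intro sum_pos finite_subset_S) auto
  ultimately show ?thesis by (simp add: prob_from_eq_sum[OF AS])
qed

lemma sum_cond_weight:
  assumes "A \<subseteq> S" "A \<noteq> {}"
  shows "(\<Sum>x\<in>A. \<mu> x / mass \<mu> A) = 1"
  using mass_pos[OF assms] by (simp add: mass_eq_sum[OF assms(1)] flip: sum_divide_distrib)

lemma cond_weight_pos: "A \<subseteq> S \<Longrightarrow> x \<in> A \<Longrightarrow> 0 < \<mu> x / mass \<mu> A"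
  using mass_pos[of A] mu_pos[of x] by (metis divide_pos_pos empty_iff subsetD)

lemma expect_scale: "A \<subseteq> S \<Longrightarrow> expect \<mu> A (\<lambda>x. c * g x) = c * expect \<mu> A g"
  by (simp add: expect_eq_sum sum_distrib_left algebra_simps)

lemma variance_scale: "A \<subseteq> S \<Longrightarrow> variance_on \<mu> A (\<lambda>x. c * g x) = c\<^sup>2 * variance_on \<mu> A g"
proof -
  assume A: "A \<subseteq> S"
  have "expect \<mu> A (\<lambda>x. (c * g x)\<^sup>2) = c\<^sup>2 * expect \<mu> A (\<lambda>x. (g x)\<^sup>2)"
    using expect_scale[OF A, of "c\<^sup>2" "\<lambda>x. (g x)\<^sup>2"] by (simp add: power_mult_distrib)
  then show ?thesis unfolding variance_on_def using expect_scale[OF A, of c g]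
    by (simp add: power_mult_distrib algebra_simps)
qed

lemma variance_nonneg:
  assumes "A \<subseteq> S" "A \<noteq> {}"
  shows "0 \<le> variance_on \<mu> A g"
  using weighted_mean_sq_le[OF _ sum_cond_weight[OF assms], of g] cond_weight_pos[OF assms(1)]
  unfolding variance_on_def expect_eq_sum[OF assms(1)] by (simp add: less_imp_le)

lemma variance_eq_0_if_energy_eq_0:
  assumes E0: "energy f = 0" and A: "A \<subseteq> S" "A \<noteq> {}"
  shows "variance_on \<mu> A f = 0"
proof -
  obtain x0 where x0: "x0 \<in> A" using A(2) by auto
  have f: "x \<in> A \<Longrightarrow> f x = f x0" for x using energy_eq_0_imp_eq[OF E0, of x x0] x0 A(1) by blast
  have "expect \<mu> A (\<lambda>x. q (f x)) = q (f x0)" for q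
  proof -
    have "expect \<mu> A (\<lambda>x. q (f x)) = (\<Sum>x\<in>A. \<mu> x / mass \<mu> A) * q (f x0)"
      unfolding expect_eq_sum[OF A(1)] sum_distrib_right by (simp add: f)
    then show ?thesis using sum_cond_weight[OF A] by simp
  qed
  from this[of "\<lambda>t. t"] this[of "\<lambda>t. t\<^sup>2"] show ?thesis by (simp add: variance_on_def)
qed

lemma variance_le_C_PI:
  assumes E: "0 < energy f" and fin: "C_PI S P \<mu> A < \<infinity>" and A: "A \<subseteq> S" "A \<noteq> {}"
  shows "C_PI S P \<mu> A = ereal (real_of_ereal (C_PI S P \<mu> A))"
    and "0 \<le> real_of_ereal (C_PI S P \<mu> A)"
    and "variance_on \<mu> A f \<le> real_of_ereal (C_PI S P \<mu> A) * energy f"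
proof -
  define g where "g x = (1 / sqrt (energy f)) * f x" for x
  have "energy g = 1" unfolding g_def energy_scale using E by (simp add: power_divide)
  then have vC: "ereal (variance_on \<mu> A g) \<le> C_PI S P \<mu> A"
    unfolding C_PI_def by (intro Sup_upper) (auto simp: l2_def finite_S dirichlet_eq_energy)
  then have "C_PI S P \<mu> A \<noteq> -\<infinity>" "C_PI S P \<mu> A \<noteq> \<infinity>" using fin by auto
  then show C: "C_PI S P \<mu> A = ereal (real_of_ereal (C_PI S P \<mu> A))" by (cases "C_PI S P \<mu> A") auto
  have vg: "variance_on \<mu> A g \<le> real_of_ereal (C_PI S P \<mu> A)" using vC by (subst (asm) C) simp
  show "0 \<le> real_of_ereal (C_PI S P \<mu> A)" using vg variance_nonneg[OF A, of g] by linarith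
  have "f = (\<lambda>x. sqrt (energy f) * g x)" using E by (auto simp: g_def)
  then have "variance_on \<mu> A f = energy f * variance_on \<mu> A g"
    using variance_scale[OF A(1), of "sqrt (energy f)" g] E by simp
  then show "variance_on \<mu> A f \<le> real_of_ereal (C_PI S P \<mu> A) * energy f"
    using vg E by (simp add: mult.commute)
qed

lemma ent_sq_le_sum_dev_sq:
  assumes A: "A \<subseteq> S" "A \<noteq> {}" and hnn: "\<And>x. x \<in> A \<Longrightarrow> 0 \<le> h x"
    and gh: "\<And>x. x \<in> A \<Longrightarrow> g x = (h x)\<^sup>2"
    and Cm: "\<And>x. x \<in> A \<Longrightarrow> ln (1 + exp 2 / (\<mu> x / mass \<mu> A)) \<le> Cm"
  shows "ent \<mu> A g \<le> ereal (6 * Cm * (\<Sum>x\<in>A. \<mu> x / mass \<mu> A * (h x - c)\<^sup>2))"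
proof -
  define \<nu> where "\<nu> x = \<mu> x / mass \<mu> A" for x
  have \<nu>: "\<And>x. x \<in> A \<Longrightarrow> 0 < \<nu> x" "sum \<nu> A = 1"
    unfolding \<nu>_def using cond_weight_pos[OF A(1)] sum_cond_weight[OF A] by auto
  have finA: "finite A" using finite_subset_S[OF A(1)] .
  obtain x0 where x0: "x0 \<in> A" using A(2) by auto
  have "0 \<le> ln (1 + exp 2 / \<nu> x0)" using \<nu>(1)[OF x0] by (intro ln_ge_zero) simp
  then have Cm0: "0 \<le> Cm" using Cm[OF x0] by (simp add: \<nu>_def)
  have "ent \<mu> A g = ereal ((\<Sum>x\<in>A. \<nu> x * ((h x)\<^sup>2 * ln ((h x)\<^sup>2)))
      - (\<Sum>x\<in>A. \<nu> x * (h x)\<^sup>2) * ln (\<Sum>x\<in>A. \<nu> x * (h x)\<^sup>2))"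
    unfolding ent_def expect_eq_sum[OF A(1)] \<nu>_def[symmetric] using finA gh by simp
  also have "\<dots> \<le> ereal (6 * Cm * ((\<Sum>x\<in>A. \<nu> x * (h x)\<^sup>2) - (\<Sum>x\<in>A. \<nu> x * h x)\<^sup>2))"
    using entropy_sq_le_variance[OF finA \<nu> hnn] Cm by (simp add: \<nu>_def)
  also have "\<dots> \<le> ereal (6 * Cm * (\<Sum>x\<in>A. \<nu> x * (h x - c)\<^sup>2))"
    using weighted_variance_le_sum_dev_sq[OF \<nu>(2), of h c] Cm0 by (simp add: mult_left_mono)
  finally show ?thesis by (simp add: \<nu>_def)
qed

end

section \<open>Metastable chains\<close>

locale metastable_chain = reversible_chain +
  fixes K :: nat and M Sp :: "nat \<Rightarrow> nat set" and \<rho> :: real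
  assumes K2: "2 \<le> K" and msets: "metastable_sets S K M" and rhopos: "0 < \<rho>"
    and rhom: "rho_metastable S P \<mu> K M \<rho>" and part: "metastable_partition S P K M Sp"
begin

lemma M_nonempty: "j < K \<Longrightarrow> M j \<noteq> {}" using msets by (simp add: metastable_sets_def)

lemma M_subset: "j < K \<Longrightarrow> M j \<subseteq> S" using msets by (simp add: metastable_sets_def)

lemma M_disjoint: "i < K \<Longrightarrow> j < K \<Longrightarrow> i \<noteq> j \<Longrightarrow> M i \<inter> M j = {}"
  using msets by (simp add: metastable_sets_def)

lemma Sp_subset: "i < K \<Longrightarrow> Sp i \<subseteq> S" using part unfolding metastable_partition_def by blast

lemma Sp_disjoint: "i < K \<Longrightarrow> j < K \<Longrightarrow> i \<noteq> j \<Longrightarrow> Sp i \<inter> Sp j = {}"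
  using part by (simp add: metastable_partition_def)

lemma Sp_subset_valley: "i < K \<Longrightarrow> Sp i \<subseteq> valley S P K M i" using part by (simp add: metastable_partition_def)

lemma M_subset_Sp: "i < K \<Longrightarrow> M i \<subseteq> Sp i" using part by (simp add: metastable_partition_def)

lemma Mall_subset: "Mall K M \<subseteq> S" using M_subset by (auto simp: Mall_def)

lemma Mall_Int_S: "Mall K M \<inter> S \<noteq> {}"
proof -
  have "0 < K" using K2 by simp
  then obtain x where "x \<in> M 0" using M_nonempty by blast
  then show ?thesis using M_subset[of 0] \<open>0 < K\<close> by (auto simp: Mall_def)
qed

lemma p_esc_pos: "0 < p_esc P \<mu> K M"
proof -
  have K: "0 < K" "1 < K" using K2 by auto
  have M0S: "M 0 \<subseteq> S" using M_subset K by simp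
  have "M 1 \<subseteq> Mall K M - M 0" using M_disjoint[of 1 0] K by (auto simp: Mall_def)
  then have "(Mall K M - M 0) \<inter> S \<noteq> {}" using M_nonempty[OF K(2)] M_subset[OF K(2)] by blast
  then obtain x where "x \<in> M 0" "0 < hit_before P (Mall K M - M 0) (M 0) x"
    using exists_hit_before_pos[of "Mall K M - M 0" "M 0"] M0S M_nonempty[OF K(1)] by auto
  then have "0 < prob_from \<mu> (M 0) (hit_before P (Mall K M - M 0) (M 0))"
    using prob_from_pos[OF M0S] hit_before_nonneg by blast
  also have "\<dots> \<le> p_esc P \<mu> K M" unfolding p_esc_def using K by (intro Max_ge) auto
  finally show ?thesis .
qed

text \<open>The \<open>K\<close> first-entry probabilities sum to one, and on the valley of \<open>M\<^sub>i\<close> the \<open>i\<close>-th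
  is the largest.\<close>

lemma valley_hit_before_ge:
  assumes i: "i < K" and x: "x \<in> Sp i"
  shows "1 \<le> real K * hit_before P (M i) (Mall K M - M i) x"
proof -
  define Q where "Q = Mall K M"
  define hj where "hj j = hit_before P (M j) (Q - M j) x" for j
  have xS: "x \<in> S" using Sp_subset[OF i] x by auto
  have xv: "x \<in> valley S P K M i" using Sp_subset_valley[OF i] x by auto
  have le: "hj j \<le> hj i" if j: "j < K" for j
  proof (cases "j = i")
    case True then show ?thesis by simp
  next
    case False
    have fin: "finite ((\<lambda>j. hit_before P (M j) (Mall K M - M j) x) ` ({..<K} - {i}))" by simp
    have "hj j \<le> Max ((\<lambda>j. hit_before P (M j) (Mall K M - M j) x) ` ({..<K} - {i}))"
      unfolding hj_def Q_def using j False by (intro Max_ge[OF fin]) auto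
    also have "\<dots> \<le> hj i" using xv unfolding valley_def hj_def Q_def by simp
    finally show ?thesis .
  qed
  have "(\<Sum>j<K. hj j) = 1" unfolding hj_def
    by (rule sum_hit_before_eq_1[OF M_disjoint Q_def[unfolded Mall_def] _ xS]) (use Mall_Int_S in \<open>auto simp: Q_def\<close>)
  moreover have "(\<Sum>j<K. hj j) \<le> (\<Sum>j<K. hj i)" using le by (intro sum_mono) auto
  ultimately show ?thesis by (simp add: hj_def Q_def)
qed

lemma Sp_diff_M_Int_Mall:
  assumes i: "i < K"
  shows "(Sp i - M i) \<inter> Mall K M = {}"
proof -
  have "x \<notin> M j" if x: "x \<in> Sp i - M i" and j: "j < K" for x j
  proof (cases "j = i")
    case False
    then show ?thesis using x M_subset_Sp[OF j] Sp_disjoint[OF j i] by auto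
  qed (use x in simp)
  then show ?thesis by (auto simp: Mall_def)
qed

lemma capacity_outside_M:
  assumes i: "i < K" and A: "A \<subseteq> Sp i - M i" "A \<noteq> {}"
    and v1: "\<And>x. x \<in> A \<Longrightarrow> v x = 1" and v0: "\<And>x. x \<in> M i \<Longrightarrow> v x = 0"
  shows "p_esc P \<mu> K M / \<rho> * sum \<mu> A \<le> energy v"
proof -
  define Q where "Q = Mall K M"
  define e where "e = hit_before P Q A"
  define hi where "hi = hit_before P (M i) (Q - M i)"
  have AS: "A \<subseteq> S" using A Sp_subset[OF i] by auto
  have AQ: "A \<inter> Q = {}" using A Sp_diff_M_Int_Mall[OF i] by (auto simp: Q_def)
  have MiQ: "M i \<subseteq> Q" using i by (auto simp: Q_def Mall_def)
  have sA: "0 < sum \<mu> A" using A(2) AS mu_pos by (intro sum_pos finite_subset_S) auto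
  have "real K * p_esc P \<mu> K M \<le> \<rho> * prob_from \<mu> A (hit_before P Q A)"
    using rhom A(2) AS AQ unfolding rho_metastable_def Q_def by blast
  then have meta: "real K * p_esc P \<mu> K M * sum \<mu> A \<le> \<rho> * (\<Sum>x\<in>A. \<mu> x * e x)"
    using sA unfolding prob_from_eq_sum[OF AS] e_def by (simp add: field_simps)
  have "\<mu> x * e x \<le> real K * (\<mu> x * e x * hi x)" if x: "x \<in> A" for x
  proof -
    have "1 \<le> real K * hi x" unfolding hi_def Q_def using valley_hit_before_ge[OF i] x A by auto
    moreover have "0 \<le> \<mu> x * e x"
      using mu_pos[of x] AS x hit_before_nonneg[of Q A x] unfolding e_def by auto
    ultimately show ?thesis using mult_left_mono[of 1 "real K * hi x" "\<mu> x * e x"] by (simp add: algebra_simps)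
  qed
  then have valley: "(\<Sum>x\<in>A. \<mu> x * e x) \<le> real K * (\<Sum>x\<in>A. \<mu> x * e x * hi x)"
    unfolding sum_distrib_left by (rule sum_mono)
  have flow: "(\<Sum>x\<in>A. \<mu> x * e x * hi x) \<le> energy v"
    unfolding e_def hi_def
    by (rule flow_le_capacity) (use Mall_subset MiQ M_nonempty[OF i] AS AQ v1 v0 in \<open>auto simp: Q_def\<close>)
  have "(\<Sum>x\<in>A. \<mu> x * e x) \<le> real K * energy v"
    using valley mult_left_mono[OF flow, of "real K"] by simp
  then have "\<rho> * (\<Sum>x\<in>A. \<mu> x * e x) \<le> \<rho> * (real K * energy v)" using rhopos by simp
  then have "real K * (p_esc P \<mu> K M * sum \<mu> A) \<le> real K * (\<rho> * energy v)"
    using meta by (simp add: algebra_simps)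
  then have "p_esc P \<mu> K M * sum \<mu> A \<le> \<rho> * energy v" using K2 by simp
  then show ?thesis using rhopos by (simp add: field_simps)
qed

lemma local_poincare:
  assumes i: "i < K" and CPI: "\<And>j. j < K \<Longrightarrow> C_PI S P \<mu> (M j) < \<infinity>"
  shows "mass \<mu> (M i) * variance_on \<mu> (M i) f \<le> real_of_ereal (C_PI_M S P \<mu> K M) * energy f"
    and "energy f \<le> real_of_ereal (C_PI_M S P \<mu> K M) * energy f"
proof -
  have MS: "j < K \<Longrightarrow> M j \<subseteq> S" "j < K \<Longrightarrow> M j \<noteq> {}" for j using M_subset M_nonempty by auto
  have "mass \<mu> (M i) * variance_on \<mu> (M i) f \<le> real_of_ereal (C_PI_M S P \<mu> K M) * energy f
    \<and> energy f \<le> real_of_ereal (C_PI_M S P \<mu> K M) * energy f"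
  proof (cases "energy f = 0")
    case True
    then show ?thesis using variance_eq_0_if_energy_eq_0[OF True MS[OF i]] by simp
  next
    case False
    then have E: "0 < energy f" using energy_nonneg[of f] by simp
    define c where "c j = real_of_ereal (C_PI S P \<mu> (M j))" for j
    have PI: "C_PI S P \<mu> (M j) = ereal (c j)" "0 \<le> c j" "variance_on \<mu> (M j) f \<le> c j * energy f"
      if "j < K" for j
      using variance_le_C_PI[OF E CPI[OF that] MS[OF that]] by (simp_all add: c_def)
    have mc: "j < K \<Longrightarrow> 0 \<le> mass \<mu> (M j) * c j" for j
      using PI(2) mass_pos[OF MS] by (simp add: less_imp_le)
    have "(\<Sum>j<K. ereal (mass \<mu> (M j)) * C_PI S P \<mu> (M j)) = (\<Sum>j<K. ereal (mass \<mu> (M j) * c j))"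
      by (rule sum.cong) (simp_all add: PI(1))
    then have "C_PI_M S P \<mu> K M = max 1 (ereal (\<Sum>j<K. mass \<mu> (M j) * c j))"
      unfolding C_PI_M_def sum_ereal by simp
    then have C: "real_of_ereal (C_PI_M S P \<mu> K M) = max 1 (\<Sum>j<K. mass \<mu> (M j) * c j)"
      by (simp add: max_def)
    have "mass \<mu> (M i) * c i \<le> (\<Sum>j<K. mass \<mu> (M j) * c j)"
      using i mc by (intro member_le_sum) auto
    then have "mass \<mu> (M i) * c i * energy f \<le> real_of_ereal (C_PI_M S P \<mu> K M) * energy f"
      and "1 * energy f \<le> real_of_ereal (C_PI_M S P \<mu> K M) * energy f"
      unfolding C using E by (intro mult_right_mono; simp)+
    moreover have "mass \<mu> (M i) * variance_on \<mu> (M i) f \<le> mass \<mu> (M i) * c i * energy f"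
      using PI(3)[OF i] mass_pos[OF MS[OF i]] by (simp add: mult.assoc)
    ultimately show ?thesis by simp
  qed
  then show "mass \<mu> (M i) * variance_on \<mu> (M i) f \<le> real_of_ereal (C_PI_M S P \<mu> K M) * energy f"
    and "energy f \<le> real_of_ereal (C_PI_M S P \<mu> K M) * energy f" by auto
qed

lemma cond_sq_on_Sp:
  assumes i: "i < K" and x: "x \<in> Sp i"
  shows "cond_sq \<mu> K M f x = (if x \<in> M i then expect \<mu> (M i) (\<lambda>y. (f y)\<^sup>2) else (f x)\<^sup>2)"
proof (cases "\<exists>j<K. x \<in> M j")
  case True
  then obtain j where j: "j < K" "x \<in> M j" by auto
  have ji: "j = i"
  proof (rule ccontr)
    assume "j \<noteq> i"
    then show False using Sp_disjoint[OF j(1) i] M_subset_Sp[OF j(1)] j x by auto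
  qed
  have "(THE j. j < K \<and> x \<in> M j) = i"
  proof (rule the_equality)
    show "i < K \<and> x \<in> M i" using i j ji by simp
    fix j' assume "j' < K \<and> x \<in> M j'"
    then show "j' = i" using M_disjoint[of j' i] i j ji by auto
  qed
  then show ?thesis using True j ji unfolding cond_sq_def by simp
next
  case False
  then show ?thesis using i unfolding cond_sq_def by auto
qed

lemma deviation_on_M_le_variance:
  fixes f :: "nat \<Rightarrow> real"
  assumes i: "i < K"
  defines "\<alpha> \<equiv> sqrt (expect \<mu> (M i) (\<lambda>y. (f y)\<^sup>2))"
  shows "(\<Sum>x\<in>M i. \<mu> x * (\<bar>f x\<bar> - \<alpha>)\<^sup>2) \<le> 2 * (mass \<mu> (M i) * variance_on \<mu> (M i) f)"
proof -
  have Mi: "M i \<subseteq> S" "M i \<noteq> {}" using M_subset[OF i] M_nonempty[OF i] by auto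
  define \<nu> where "\<nu> x = \<mu> x / mass \<mu> (M i)" for x
  have \<nu>: "\<And>x. x \<in> M i \<Longrightarrow> 0 \<le> \<nu> x" "sum \<nu> (M i) = 1"
    unfolding \<nu>_def using cond_weight_pos[OF Mi(1)] sum_cond_weight[OF Mi] by (auto intro: less_imp_le)
  have "\<bar>\<Sum>x\<in>M i. \<nu> x * f x\<bar> \<le> (\<Sum>x\<in>M i. \<nu> x * \<bar>f x\<bar>)"
    using \<nu>(1) by (auto intro!: order_trans[OF sum_abs] sum_mono simp: abs_mult)
  then have "(\<Sum>x\<in>M i. \<nu> x * f x)\<^sup>2 \<le> (\<Sum>x\<in>M i. \<nu> x * \<bar>f x\<bar>)\<^sup>2"
    by (metis abs_ge_zero power2_abs power_mono)
  moreover have "(\<Sum>x\<in>M i. \<nu> x * (\<bar>f x\<bar> - \<alpha>)\<^sup>2)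
      \<le> 2 * ((\<Sum>x\<in>M i. \<nu> x * \<bar>f x\<bar>\<^sup>2) - (\<Sum>x\<in>M i. \<nu> x * \<bar>f x\<bar>)\<^sup>2)"
    using sum_dev_root_mean_sq_le[OF \<nu>, of "\<lambda>x. \<bar>f x\<bar>"]
    unfolding \<alpha>_def expect_eq_sum[OF Mi(1)] \<nu>_def by simp
  ultimately have "(\<Sum>x\<in>M i. \<nu> x * (\<bar>f x\<bar> - \<alpha>)\<^sup>2) \<le> 2 * variance_on \<mu> (M i) f"
    unfolding variance_on_def expect_eq_sum[OF Mi(1)] \<nu>_def by simp
  then show ?thesis
    using mass_pos[OF Mi] by (simp add: \<nu>_def sum_divide_distrib[symmetric] field_simps)
qed

lemma deviation_part_outside_M_le:
  assumes i: "i < K" and unn: "\<And>x. 0 \<le> u x" and contr: "\<And>x y. \<bar>u x - u y\<bar> \<le> \<bar>f x - f y\<bar>"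
  shows "p_esc P \<mu> K M / \<rho> * (\<Sum>x\<in>Sp i - M i. \<mu> x * (u x)\<^sup>2)
    \<le> 32 * energy f + 64 * (\<Sum>x\<in>M i. \<mu> x * (u x)\<^sup>2)"
proof -
  define w where "w x = (if x \<in> M i then 0 else u x)" for x
  have "p_esc P \<mu> K M / \<rho> * (\<Sum>x\<in>Sp i - M i. \<mu> x * (w x)\<^sup>2) \<le> 16 * energy w"
  proof (rule mazya_inequality)
    show "Sp i - M i \<subseteq> S" using Sp_subset[OF i] by auto
    show "0 < p_esc P \<mu> K M / \<rho>" using p_esc_pos rhopos by simp
    fix A and v :: "nat \<Rightarrow> real"
    assume "A \<subseteq> Sp i - M i" "A \<noteq> {}" "\<And>x. x \<in> A \<Longrightarrow> v x = 1" "\<And>x. x \<in> M i \<Longrightarrow> v x = 0"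
    then show "p_esc P \<mu> K M / \<rho> * sum \<mu> A \<le> energy v" by (rule capacity_outside_M[OF i])
  qed (auto simp: w_def unn)
  also have "energy w \<le> 2 * energy u + 4 * (\<Sum>x\<in>M i. \<mu> x * (u x)\<^sup>2)"
    unfolding w_def by (rule energy_vanish_on[OF M_subset[OF i]])
  finally have "p_esc P \<mu> K M / \<rho> * (\<Sum>x\<in>Sp i - M i. \<mu> x * (w x)\<^sup>2)
      \<le> 32 * energy f + 64 * (\<Sum>x\<in>M i. \<mu> x * (u x)\<^sup>2)"
    using energy_contraction[of u f, OF contr] by simp
  moreover have "(\<Sum>x\<in>Sp i - M i. \<mu> x * (w x)\<^sup>2) = (\<Sum>x\<in>Sp i - M i. \<mu> x * (u x)\<^sup>2)"
    by (intro sum.cong) (auto simp: w_def)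
  ultimately show ?thesis by simp
qed

lemma deviation_outside_M_le_energy:
  fixes f :: "nat \<Rightarrow> real"
  assumes i: "i < K" and CPI: "\<And>j. j < K \<Longrightarrow> C_PI S P \<mu> (M j) < \<infinity>"
  defines "\<alpha> \<equiv> sqrt (expect \<mu> (M i) (\<lambda>y. (f y)\<^sup>2))"
  shows "p_esc P \<mu> K M / \<rho> * (\<Sum>x\<in>Sp i - M i. \<mu> x * (\<bar>f x\<bar> - \<alpha>)\<^sup>2)
     \<le> 192 * real_of_ereal (C_PI_M S P \<mu> K M) * energy f"
proof -
  define C where "C = real_of_ereal (C_PI_M S P \<mu> K M)"
  define up where "up x = max 0 (\<bar>f x\<bar> - \<alpha>)" for x
  define um where "um x = max 0 (\<alpha> - \<bar>f x\<bar>)" for x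
  have sq: "(\<bar>f x\<bar> - \<alpha>)\<^sup>2 = (up x)\<^sup>2 + (um x)\<^sup>2" for x
    unfolding up_def um_def by (auto simp: max_def power2_eq_square algebra_simps)
  have "\<bar>up x - up y\<bar> \<le> \<bar>f x - f y\<bar>" "\<bar>um x - um y\<bar> \<le> \<bar>f x - f y\<bar>" for x y
    unfolding up_def um_def using abs_triangle_ineq3[of "f x" "f y"] abs_triangle_ineq3[of "f y" "f x"]
    by (auto simp: max_def abs_minus_commute)
  then have "p_esc P \<mu> K M / \<rho> * (\<Sum>x\<in>Sp i - M i. \<mu> x * ((up x)\<^sup>2 + (um x)\<^sup>2))
      \<le> 64 * energy f + 64 * (\<Sum>x\<in>M i. \<mu> x * ((up x)\<^sup>2 + (um x)\<^sup>2))"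
    using deviation_part_outside_M_le[OF i, of up f] deviation_part_outside_M_le[OF i, of um f]
    by (simp add: up_def um_def distrib_left sum.distrib)
  also have "\<dots> \<le> 64 * energy f + 128 * (mass \<mu> (M i) * variance_on \<mu> (M i) f)"
    using deviation_on_M_le_variance[OF i, of f] unfolding \<alpha>_def[symmetric] sq by simp
  also have "\<dots> \<le> 192 * C * energy f" using local_poincare[OF i CPI, of f] unfolding C_def by simp
  finally show ?thesis unfolding sq C_def .
qed

lemma entropy_cond_sq_le:
  fixes f :: "nat \<Rightarrow> real"
  assumes i: "i < K" and CPI: "\<And>j. j < K \<Longrightarrow> C_PI S P \<mu> (M j) < \<infinity>"
    and Cm: "\<And>x. x \<in> Sp i \<Longrightarrow> ln (1 + exp 2 / (\<mu> x / mass \<mu> (Sp i))) \<le> Cm"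
  shows "ent \<mu> (Sp i) (cond_sq \<mu> K M f) \<le> ereal (1152 * Cm * real_of_ereal (C_PI_M S P \<mu> K M) * \<rho>
             / (mass \<mu> (Sp i) * p_esc P \<mu> K M) * dirichlet S P \<mu> f)"
proof -
  define C where "C = real_of_ereal (C_PI_M S P \<mu> K M)"
  define m where "m = mass \<mu> (Sp i)"
  define \<alpha> where "\<alpha> = sqrt (expect \<mu> (M i) (\<lambda>y. (f y)\<^sup>2))"
  define h where "h x = (if x \<in> M i then \<alpha> else \<bar>f x\<bar>)" for x
  have Sp: "Sp i \<subseteq> S" "Sp i \<noteq> {}" "M i \<subseteq> Sp i"
    using Sp_subset[OF i] M_subset_Sp[OF i] M_nonempty[OF i] by auto
  have mpos: "0 < m" unfolding m_def using mass_pos[OF Sp(1,2)] .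
  have "0 \<le> expect \<mu> (M i) (\<lambda>y. (f y)\<^sup>2)"
    unfolding expect_eq_sum[OF M_subset[OF i]] using cond_weight_pos[OF M_subset[OF i]]
    by (intro sum_nonneg mult_nonneg_nonneg) (auto intro: less_imp_le)
  then have gh: "x \<in> Sp i \<Longrightarrow> cond_sq \<mu> K M f x = (h x)\<^sup>2" and hnn: "0 \<le> h x" for x
    using cond_sq_on_Sp[OF i, of x f] by (simp_all add: h_def \<alpha>_def)
  have "ent \<mu> (Sp i) (cond_sq \<mu> K M f) \<le> ereal (6 * Cm * (\<Sum>x\<in>Sp i. \<mu> x / m * (h x - \<alpha>)\<^sup>2))"
    unfolding m_def by (rule ent_sq_le_sum_dev_sq[OF Sp(1,2) hnn gh Cm])
  also have "(\<Sum>x\<in>Sp i. \<mu> x / m * (h x - \<alpha>)\<^sup>2) = (\<Sum>x\<in>Sp i - M i. \<mu> x * (\<bar>f x\<bar> - \<alpha>)\<^sup>2) / m"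
    using sum.subset_diff[OF Sp(3) finite_subset_S[OF Sp(1)], of "\<lambda>x. \<mu> x / m * (h x - \<alpha>)\<^sup>2"]
    by (simp add: h_def sum_divide_distrib)
  finally have ent: "ent \<mu> (Sp i) (cond_sq \<mu> K M f)
      \<le> ereal (6 * Cm * ((\<Sum>x\<in>Sp i - M i. \<mu> x * (\<bar>f x\<bar> - \<alpha>)\<^sup>2) / m))" .
  have "(\<Sum>x\<in>Sp i - M i. \<mu> x * (\<bar>f x\<bar> - \<alpha>)\<^sup>2) \<le> 192 * C * energy f * \<rho> / p_esc P \<mu> K M"
    using deviation_outside_M_le_energy[OF i CPI, of f] p_esc_pos rhopos
    unfolding C_def \<alpha>_def by (simp add: field_simps)
  moreover obtain x0 where x0: "x0 \<in> Sp i" using Sp(2) by auto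
  have "0 < exp 2 / (\<mu> x0 / mass \<mu> (Sp i))"
    using cond_weight_pos[OF Sp(1) x0] by (rule divide_pos_pos[OF exp_gt_zero])
  then have "0 \<le> ln (1 + exp 2 / (\<mu> x0 / mass \<mu> (Sp i)))" by (intro ln_ge_zero) linarith
  then have "0 \<le> Cm" using Cm[OF x0] by linarith
  ultimately have "6 * Cm * ((\<Sum>x\<in>Sp i - M i. \<mu> x * (\<bar>f x\<bar> - \<alpha>)\<^sup>2) / m)
      \<le> 6 * Cm * ((192 * C * energy f * \<rho> / p_esc P \<mu> K M) / m)"
    using mpos by (intro mult_left_mono divide_right_mono) auto
  also have "\<dots> = 1152 * Cm * C * \<rho> / (m * p_esc P \<mu> K M) * energy f" by (simp add: field_simps)
  finally show ?thesis using ent unfolding dirichlet_eq_energy C_def m_def by (simp add: order_trans)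
qed

end

section \<open>Reduction to a finite state space\<close>

lemma C_mass_upper:
  assumes "j < K" "x \<in> Sp j"
  shows "ereal (ln (1 + exp 2 / (\<mu> x / mass \<mu> (Sp j)))) \<le> C_mass \<mu> K Sp"
proof -
  have "ereal (ln (1 + exp 2 / (\<mu> x / mass \<mu> (Sp j)))) \<le> (SUP x\<in>Sp j. ereal (ln (1 + exp 2 / (\<mu> x / mass \<mu> (Sp j)))))"
    using assms(2) by (rule SUP_upper)
  also have "\<dots> \<le> C_mass \<mu> K Sp" unfolding C_mass_def using assms(1) by (intro SUP_upper) simp
  finally show ?thesis .
qed

lemma ln_le_C_mass:
  assumes "C_mass \<mu> K Sp < \<infinity>" "j < K" "x \<in> Sp j"
  shows "ln (1 + exp 2 / (\<mu> x / mass \<mu> (Sp j))) \<le> real_of_ereal (C_mass \<mu> K Sp)"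
  using C_mass_upper[where \<mu>=\<mu> and Sp=Sp and j=j and K=K and x=x, OF assms(2,3)] assms(1)
  by (cases "C_mass \<mu> K Sp") auto

lemma C_mass_lower_bound:
  assumes fin: "C_mass \<mu> K Sp < \<infinity>" and x: "j < K" "x \<in> Sp j"
    and pos: "0 < \<mu> x" "0 < mass \<mu> (Sp j)"
  shows "exp 2 * mass \<mu> (Sp j) / exp (real_of_ereal (C_mass \<mu> K Sp)) \<le> \<mu> x"
proof -
  define m where "m = mass \<mu> (Sp j)"
  have "ln (1 + exp 2 / (\<mu> x / m)) \<le> real_of_ereal (C_mass \<mu> K Sp)"
    using ln_le_C_mass[OF fin x] unfolding m_def .
  moreover have "0 < 1 + exp 2 / (\<mu> x / m)" using pos by (simp add: m_def add_pos_pos)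
  ultimately have "1 + exp 2 * m / \<mu> x \<le> exp (real_of_ereal (C_mass \<mu> K Sp))"
    by (metis exp_le_cancel_iff exp_ln divide_divide_eq_right)
  then show ?thesis using pos by (simp add: m_def field_simps)
qed

lemma finite_if_has_sum_ge:
  fixes \<mu> :: "'a \<Rightarrow> real"
  assumes hs: "(\<mu> has_sum 1) S" and AS: "A \<subseteq> S" and nn: "\<forall>x\<in>S. 0 \<le> \<mu> x"
    and \<delta>: "0 < \<delta>" "\<And>x. x \<in> A \<Longrightarrow> \<delta> \<le> \<mu> x"
  shows "finite A"
proof (rule ccontr)
  assume "infinite A"
  obtain n :: nat where n: "1 / \<delta> < real n" using reals_Archimedean2 by blast
  obtain F where F: "F \<subseteq> A" "finite F" "card F = n" using infinite_arbitrarily_large[OF \<open>infinite A\<close>] by blast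
  have "real n * \<delta> \<le> sum \<mu> F" using sum_mono[of F "\<lambda>_. \<delta>" \<mu>] \<delta>(2) F by auto
  also have "\<dots> \<le> 1" using finite_sum_le_has_sum[OF hs F(2)] F(1) AS nn by auto
  finally show False using n \<delta>(1) by (simp add: field_simps)
qed

lemma finite_S_if_C_mass_finite:
  fixes \<mu> :: "nat \<Rightarrow> real"
  assumes pos: "\<forall>x\<in>S. 0 < \<mu> x" and hs: "(\<mu> has_sum 1) S"
    and U: "(\<Union>i<K. Sp i) = S" and fin: "C_mass \<mu> K Sp < \<infinity>"
  shows "finite S"
proof -
  have "finite (Sp j)" if j: "j < K" for j
  proof (cases "Sp j = {}")
    case False
    then obtain x0 where x0: "x0 \<in> Sp j" by auto
    have SpS: "Sp j \<subseteq> S" using U j by auto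
    have "\<mu> summable_on Sp j" using hs summable_on_subset_banach[OF _ SpS] by (auto simp: summable_on_def)
    then have "\<mu> x0 \<le> mass \<mu> (Sp j)" unfolding mass_def
      using finite_sum_le_infsum[of \<mu> "Sp j" "{x0}"] x0 pos SpS by (auto intro: less_imp_le)
    then have "0 < mass \<mu> (Sp j)" using pos x0 SpS by fastforce
    then show ?thesis
      using C_mass_lower_bound[OF fin j] pos SpS
      by (intro finite_if_has_sum_ge[OF hs SpS, of "exp 2 * mass \<mu> (Sp j) / exp (real_of_ereal (C_mass \<mu> K Sp))"])
        (auto intro: less_imp_le)
  qed simp
  then show ?thesis using U by auto
qed

lemma metastable_chain_if_C_mass_finite:
  assumes ms: "markov_setting S P \<mu>" and "2 \<le> K" "metastable_sets S K M" "0 < \<rho>"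
    "rho_metastable S P \<mu> K M \<rho>" and part: "metastable_partition S P K M Sp" and fin: "C_mass \<mu> K Sp < \<infinity>"
  shows "metastable_chain S P \<mu> K M Sp \<rho>"
proof -
  interpret irreducible_chain S P using ms by unfold_locales (auto simp: markov_setting_def)
  have pos: "\<forall>x\<in>S. 0 < \<mu> x" using ms stationary_pos by (simp add: markov_setting_def)
  have finS: "finite S"
    using finite_S_if_C_mass_finite[OF pos _ _ fin] ms part
    by (simp add: markov_setting_def metastable_partition_def)
  have "(\<Sum>x\<in>S. \<mu> x * trans_p P x y) = \<mu> y" if "y \<in> S" for y
  proof -
    have "((\<lambda>x. \<mu> x * trans_p P x y) has_sum \<mu> y) S" using ms that by (simp add: markov_setting_def)
    then show ?thesis using has_sum_unique has_sum_finite[OF finS] by blast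
  qed
  with finS pos show ?thesis using assms
    by unfold_locales (auto simp: markov_setting_def)
qed

theorem mainTheorem16:
  shows "\<exists>c::real. \<forall>(S::nat set) (P::nat \<Rightarrow> nat pmf) (\<mu>::nat \<Rightarrow> real) (K::nat)
      (M::nat \<Rightarrow> nat set) (Sp::nat \<Rightarrow> nat set) (\<rho>::real).
    markov_setting S P \<mu> \<and> 2 \<le> K \<and> metastable_sets S K M \<and> 0 < \<rho> \<and>
    rho_metastable S P \<mu> K M \<rho> \<and> metastable_partition S P K M Sp \<and>
    (\<forall>j<K. C_PI S P \<mu> (M j) < \<infinity>) \<and> C_mass \<mu> K Sp < \<infinity> \<longrightarrow>
    (\<forall>f i. l2 S \<mu> f \<and> i < K \<longrightarrow>
      ent \<mu> (Sp i) (cond_sq \<mu> K M f) \<le>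
      ereal (c * real_of_ereal (C_mass \<mu> K Sp) * real_of_ereal (C_PI_M S P \<mu> K M) * \<rho>
             / (mass \<mu> (Sp i) * p_esc P \<mu> K M) * dirichlet S P \<mu> f))"
proof (intro exI[of _ 1152] allI impI)
  \<comment> \<open>\<open>1152 = 6 \<cdot> 192\<close>; the hypothesis \<open>l2 S \<mu> f\<close> is automatic once \<open>S\<close> is finite.\<close>
  fix S P \<mu> K M Sp \<rho> f i
  assume H: "markov_setting S P \<mu> \<and> 2 \<le> K \<and> metastable_sets S K M \<and> 0 < \<rho> \<and>
    rho_metastable S P \<mu> K M \<rho> \<and> metastable_partition S P K M Sp \<and>
    (\<forall>j<K. C_PI S P \<mu> (M j) < \<infinity>) \<and> C_mass \<mu> K Sp < \<infinity>"
    and fi: "l2 S \<mu> f \<and> i < K"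
  interpret metastable_chain S P \<mu> K M Sp \<rho>
    using H by (intro metastable_chain_if_C_mass_finite) auto
  have Cm: "ln (1 + exp 2 / (\<mu> x / mass \<mu> (Sp i))) \<le> real_of_ereal (C_mass \<mu> K Sp)"
    if "x \<in> Sp i" for x
    using ln_le_C_mass[of \<mu> K Sp i x] H fi that by blast
  show "ent \<mu> (Sp i) (cond_sq \<mu> K M f) \<le>
      ereal (1152 * real_of_ereal (C_mass \<mu> K Sp) * real_of_ereal (C_PI_M S P \<mu> K M) * \<rho>
             / (mass \<mu> (Sp i) * p_esc P \<mu> K M) * dirichlet S P \<mu> f)"
    using entropy_cond_sq_le[OF _ _ Cm] H fi by blast
qed

end
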